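(* Let $(X,\sigma)$ be a nondegenerate symplectic space and $\mathcal{R}(X,\sigma)$ its resolvent algebra. For all $\lambda\in\mathbb{R}\setminus\{0\}$ and $f\in X\setminus\{0\}$, the closed two-sided ideal generated by $R(\lambda,f)$ satisfies $$[R(\lambda,f)\mathcal{R}(X,\sigma)]=[\mathcal{R}(X,\sigma)R(\lambda,f)]=[\mathcal{R}(X,\sigma)R(\lambda,f)\mathcal{R}(X,\sigma)],$$ and this ideal is proper. Moreover, for distinct $f_1,\dots,f_n\in X\setminus\{0\}$ and $\lambda_1,\dots,\lambda_n\in\mathbb{R}\setminus\{0\}$, the intersection of the ideals $[R(\lambda_i,f_i)\mathcal{R}(X,\sigma)]$, $i=1,\dots,n$, equals $[R(\lambda_1,f_1)\cdots R(\lambda_n,f_n)\mathcal{R}(X,\sigma)]$.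
   Context: $[\,\cdot\,]$ denotes the closed linear span. The resolvent algebra: let $\mathcal{R}_0$ be the universal unital $*$-algebra generated by $R(\lambda,f)$, $\lambda\in\mathbb{R}\setminus\{0\}$, $f\in X$, subject to (for all $\lambda,\mu,\nu\neq0$, $f,g\in X$): $R(\lambda,0)=-\frac{i}{\lambda}\mathbb{1}$; $R(\lambda,f)^*=R(-\lambda,f)$; $\nu R(\nu\lambda,\nu f)=R(\lambda,f)$; $R(\lambda,f)-R(\mu,f)=i(\mu-\lambda)R(\lambda,f)R(\mu,f)$; $[R(\lambda,f),R(\mu,g)]=i\sigma(f,g)R(\lambda,f)R(\mu,g)^2R(\lambda,f)$; and, for $\lambda+\mu\neq0$, $R(\lambda,f)R(\mu,g)=R(\lambda+\mu,f+g)[R(\lambda,f)+R(\mu,g)+i\sigma(f,g)R(\lambda,f)^2R(\mu,g)]$. $\mathcal{R}(X,\sigma)$ is the C*-algebra obtained by factoring $\mathcal{R}_0$ by the kernel of the enveloping C*-seminorm $\|A\|=\sup_\omega\omega(A^*A)^{1/2}$ (over normalized positive functionals) and completing. *)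

theory Defs
  imports Complex_Main
begin

definition symplectic_form :: "('a::real_vector \<Rightarrow> 'a \<Rightarrow> real) \<Rightarrow> bool" where
  "symplectic_form \<sigma> \<longleftrightarrow>
     (\<forall>f g h. \<sigma> (f + g) h = \<sigma> f h + \<sigma> g h) \<and>
     (\<forall>c f g. \<sigma> (c *\<^sub>R f) g = c * \<sigma> f g) \<and>
     (\<forall>f g. \<sigma> f g = - \<sigma> g f) \<and>
     (\<forall>f. (\<forall>g. \<sigma> f g = 0) \<longrightarrow> f = 0)"

text \<open>Elements are finitely supported complex functions on words in the letters
  (lambda, f) with lambda \<noteq> 0 (noncommutative polynomials).  The involution is the
  one fixed by R(lambda,f)^* = R(-lambda,f).\<close>

type_synonym 'a rword = "(real \<times> 'a) list"
type_synonym 'a ralg = "'a rword \<Rightarrow> complex"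

definition fa_carrier :: "'a ralg set" where
  "fa_carrier = {p. finite {w. p w \<noteq> 0} \<and> (\<forall>w. p w \<noteq> 0 \<longrightarrow> (\<forall>x\<in>set w. fst x \<noteq> 0))}"

definition fa_zero :: "'a ralg" where "fa_zero = (\<lambda>w. 0)"
definition fa_unit :: "'a ralg" where "fa_unit = (\<lambda>w. if w = [] then 1 else 0)"
definition fa_gen :: "real \<Rightarrow> 'a \<Rightarrow> 'a ralg" where
  "fa_gen l f = (\<lambda>w. if w = [(l, f)] then 1 else 0)"
definition fa_add :: "'a ralg \<Rightarrow> 'a ralg \<Rightarrow> 'a ralg" where
  "fa_add p q = (\<lambda>w. p w + q w)"
definition fa_diff :: "'a ralg \<Rightarrow> 'a ralg \<Rightarrow> 'a ralg" where
  "fa_diff p q = (\<lambda>w. p w - q w)"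
definition fa_scale :: "complex \<Rightarrow> 'a ralg \<Rightarrow> 'a ralg" where
  "fa_scale c p = (\<lambda>w. c * p w)"
definition fa_mult :: "'a ralg \<Rightarrow> 'a ralg \<Rightarrow> 'a ralg" where
  "fa_mult p q = (\<lambda>w. \<Sum>i\<le>length w. p (take i w) * q (drop i w))"
definition fa_star :: "'a ralg \<Rightarrow> 'a ralg" where
  "fa_star p = (\<lambda>w. cnj (p (rev (map (\<lambda>(l, f). (- l, f)) w))))"

definition fa_prod :: "'a ralg list \<Rightarrow> 'a ralg" where
  "fa_prod xs = foldr fa_mult xs fa_unit"

inductive_set fa_span :: "'a ralg set \<Rightarrow> 'a ralg set" for S where
  span_zero: "fa_zero \<in> fa_span S"
| span_step: "a \<in> S \<Longrightarrow> p \<in> fa_span S \<Longrightarrow> fa_add (fa_scale c a) p \<in> fa_span S"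

section \<open>Defining relations of the resolvent algebra (as elements lhs - rhs)\<close>

definition resolvent_rels :: "('a::real_vector \<Rightarrow> 'a \<Rightarrow> real) \<Rightarrow> 'a ralg set" where
  "resolvent_rels \<sigma> =
     {fa_diff (fa_gen l 0) (fa_scale (- \<i> / complex_of_real l) fa_unit) | l. l \<noteq> 0}
   \<union> {fa_diff (fa_scale (complex_of_real \<nu>) (fa_gen (\<nu> * l) (\<nu> *\<^sub>R f))) (fa_gen l f)
        | \<nu> l f. \<nu> \<noteq> 0 \<and> l \<noteq> 0}
   \<union> {fa_diff (fa_diff (fa_gen l f) (fa_gen m f))
        (fa_scale (\<i> * complex_of_real (m - l)) (fa_mult (fa_gen l f) (fa_gen m f)))
        | l m f. l \<noteq> 0 \<and> m \<noteq> 0}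
   \<union> {fa_diff (fa_diff (fa_mult (fa_gen l f) (fa_gen m g)) (fa_mult (fa_gen m g) (fa_gen l f)))
        (fa_scale (\<i> * complex_of_real (\<sigma> f g))
          (fa_mult (fa_mult (fa_mult (fa_gen l f) (fa_gen m g)) (fa_gen m g)) (fa_gen l f)))
        | l m f g. l \<noteq> 0 \<and> m \<noteq> 0}
   \<union> {fa_diff (fa_mult (fa_gen l f) (fa_gen m g))
        (fa_mult (fa_gen (l + m) (f + g))
          (fa_add (fa_add (fa_gen l f) (fa_gen m g))
            (fa_scale (\<i> * complex_of_real (\<sigma> f g))
               (fa_mult (fa_mult (fa_gen l f) (fa_gen l f)) (fa_gen m g)))))
        | l m f g. l \<noteq> 0 \<and> m \<noteq> 0 \<and> l + m \<noteq> 0}"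

definition resolvent_state :: "('a::real_vector \<Rightarrow> 'a \<Rightarrow> real) \<Rightarrow> ('a ralg \<Rightarrow> complex) \<Rightarrow> bool" where
  "resolvent_state \<sigma> \<omega> \<longleftrightarrow>
     (\<forall>p\<in>fa_carrier. \<forall>q\<in>fa_carrier. \<omega> (fa_add p q) = \<omega> p + \<omega> q) \<and>
     (\<forall>c. \<forall>p\<in>fa_carrier. \<omega> (fa_scale c p) = c * \<omega> p) \<and>
     \<omega> fa_unit = 1 \<and>
     (\<forall>p\<in>fa_carrier. Im (\<omega> (fa_mult (fa_star p) p)) = 0 \<and> 0 \<le> Re (\<omega> (fa_mult (fa_star p) p))) \<and>
     (\<forall>a\<in>fa_carrier. \<forall>b\<in>fa_carrier. \<forall>r\<in>resolvent_rels \<sigma>. \<omega> (fa_mult (fa_mult a r) b) = 0)"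

definition resolvent_seminorm :: "('a::real_vector \<Rightarrow> 'a \<Rightarrow> real) \<Rightarrow> 'a ralg \<Rightarrow> real" where
  "resolvent_seminorm \<sigma> A =
     Sup ((\<lambda>\<omega>. sqrt (Re (\<omega> (fa_mult (fa_star A) A)))) ` {\<omega>. resolvent_state \<sigma> \<omega>})"

section \<open>The C*-algebra R(X,sigma) as the completion: elements are represented by
  seminorm-Cauchy sequences in R_0\<close>

definition res_cauchy :: "('a::real_vector \<Rightarrow> 'a \<Rightarrow> real) \<Rightarrow> (nat \<Rightarrow> 'a ralg) \<Rightarrow> bool" where
  "res_cauchy \<sigma> s \<longleftrightarrow> (\<forall>n. s n \<in> fa_carrier) \<and>
     (\<forall>\<epsilon>>0. \<exists>M. \<forall>m\<ge>M. \<forall>n\<ge>M. resolvent_seminorm \<sigma> (fa_diff (s m) (s n)) < \<epsilon>)"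

text \<open>The element represented by s lies in the norm closure (in R(X,sigma)) of S \<subseteq> R_0.\<close>

definition res_in_closure :: "('a::real_vector \<Rightarrow> 'a \<Rightarrow> real) \<Rightarrow> (nat \<Rightarrow> 'a ralg) \<Rightarrow> 'a ralg set \<Rightarrow> bool" where
  "res_in_closure \<sigma> s S \<longleftrightarrow>
     (\<forall>\<epsilon>>0. \<exists>a\<in>S. \<exists>M. \<forall>n\<ge>M. resolvent_seminorm \<sigma> (fa_diff (s n) a) < \<epsilon>)"

text \<open>Closed linear spans in R(X,sigma).  Since R_0 is dense and multiplication is
  continuous, [A R(X,sigma)] is the closure of span (A R_0), etc.\<close>

definition right_span :: "'a ralg \<Rightarrow> 'a ralg set" where
  "right_span A = fa_span {fa_mult A B | B. B \<in> fa_carrier}"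
definition left_span :: "'a ralg \<Rightarrow> 'a ralg set" where
  "left_span A = fa_span {fa_mult B A | B. B \<in> fa_carrier}"
definition two_sided_span :: "'a ralg \<Rightarrow> 'a ralg set" where
  "two_sided_span A = fa_span {fa_mult (fa_mult B A) C | B C. B \<in> fa_carrier \<and> C \<in> fa_carrier}"

end

theory Submission
  imports Defs
begin

text \<open>Modulo the ideal \<open>J\<close> generated by the defining relations, the commutation relation
  moves \<open>R(l,f)\<close> past any word, so \<open>R\<^sub>0 R(l,f) \<subseteq> R(l,f) R\<^sub>0 + J\<close> and conversely; since every
  state kills \<open>J\<close>, the enveloping seminorm cannot tell the three spans apart, and their closures
  coincide.  The character sending \<open>R(l,0)\<close> to \<open>-i/l\<close> and all other generators to \<open>0\<close> is a
  state which vanishes on the ideal of \<open>R(l,f)\<close>, \<open>f \<noteq> 0\<close>, but not on \<open>1\<close>, so the ideal is proper.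
  For the intersection formula, if \<open>s\<close> is approximated both by \<open>P a\<close> and by \<open>b R(l,f)\<close>, then
  \<open>u = i m R(m,f)\<close> with \<open>m\<close> large is a right approximate unit for \<open>R(l,f)\<close> with
  \<open>a u \<in> R(l,f) R\<^sub>0 + J\<close> (resolvent identity), whence \<open>s \<approx> P a u \<in> P R(l,f) R\<^sub>0\<close>.  The
  estimates rest on \<open>\<parallel>R(l,f)\<parallel> \<le> 1/\<bar>l\<bar>\<close> and on submultiplicativity of the seminorm, which
  is obtained from the perturbed vector states \<open>z \<mapsto> \<omega>(y\<^sup>* z y) + t \<omega>(z)\<close>.\<close>

section \<open>The free *-algebra\<close>

lemma sum_triangle_swap:
  fixes G :: "nat \<Rightarrow> nat \<Rightarrow> complex"
  shows "(\<Sum>j\<le>n. \<Sum>i\<le>j. G i (j - i)) = (\<Sum>i\<le>n. \<Sum>k\<le>n - i. G i k)"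
proof -
  have "(\<Sum>j\<le>n. \<Sum>i\<le>j. G i (j - i)) = (\<Sum>(i,k)\<in>{(i,k). i+k \<le> n}. G i k)"
    using sum.triangle_reindex_eq[of "\<lambda>i k. G i k" n] by simp
  also have "{(i,k). i+k \<le> n} = Sigma {..n} (\<lambda>i. {..n-i})" by auto
  also have "(\<Sum>(i,k)\<in>Sigma {..n} (\<lambda>i. {..n-i}). G i k) = (\<Sum>i\<le>n. \<Sum>k\<le>n - i. G i k)"
    by (rule sum.Sigma[symmetric]) auto
  finally show ?thesis .
qed

lemma fa_mult_assoc: "fa_mult (fa_mult p q) r = fa_mult p (fa_mult q r)"
proof (rule ext)
  fix w :: "'a rword"
  define n where "n = length w"
  define G where "G i k = p (take i w) * q (take k (drop i w)) * r (drop (i+k) w)" for i k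
  have "fa_mult (fa_mult p q) r w = (\<Sum>j\<le>n. \<Sum>i\<le>j. G i (j - i))"
    unfolding fa_mult_def G_def n_def
    by (auto simp: sum_distrib_right min_def drop_take intro!: sum.cong)
  also have "\<dots> = (\<Sum>i\<le>n. \<Sum>k\<le>n - i. G i k)" by (rule sum_triangle_swap)
  also have "\<dots> = fa_mult p (fa_mult q r) w"
    unfolding fa_mult_def G_def n_def
    by (auto simp: sum_distrib_left mult.assoc add.commute intro!: sum.cong)
  finally show "fa_mult (fa_mult p q) r w = fa_mult p (fa_mult q r) w" .
qed

definition fa_word :: "'a rword \<Rightarrow> 'a ralg" where "fa_word u = (\<lambda>w. if w = u then 1 else 0)"
definition valid_word :: "'a rword \<Rightarrow> bool" where "valid_word w \<longleftrightarrow> (\<forall>x\<in>set w. fst x \<noteq> 0)"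

lemma fa_mult_add_left: "fa_mult (fa_add p q) r = fa_add (fa_mult p r) (fa_mult q r)"
  unfolding fa_mult_def fa_add_def by (auto simp: distrib_right sum.distrib)
lemma fa_mult_add_right: "fa_mult r (fa_add p q) = fa_add (fa_mult r p) (fa_mult r q)"
  unfolding fa_mult_def fa_add_def by (auto simp: distrib_left sum.distrib)
lemma fa_mult_diff_left: "fa_mult (fa_diff p q) r = fa_diff (fa_mult p r) (fa_mult q r)"
  unfolding fa_mult_def fa_diff_def by (auto simp: left_diff_distrib sum_subtractf)
lemma fa_mult_diff_right: "fa_mult r (fa_diff p q) = fa_diff (fa_mult r p) (fa_mult r q)"
  unfolding fa_mult_def fa_diff_def by (auto simp: right_diff_distrib sum_subtractf)
lemma fa_mult_scale_left: "fa_mult (fa_scale c p) r = fa_scale c (fa_mult p r)"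
  unfolding fa_mult_def fa_scale_def by (auto simp: sum_distrib_left mult.assoc)
lemma fa_mult_scale_right: "fa_mult r (fa_scale c p) = fa_scale c (fa_mult r p)"
  unfolding fa_mult_def fa_scale_def by (auto simp: sum_distrib_left mult.left_commute)
lemma fa_mult_zero_left: "fa_mult fa_zero r = fa_zero"
  unfolding fa_mult_def fa_zero_def by auto
lemma fa_mult_zero_right: "fa_mult r fa_zero = fa_zero"
  unfolding fa_mult_def fa_zero_def by auto

lemma fa_mult_unit_left: "fa_mult fa_unit p = p"
proof (rule ext)
  fix w :: "'a rword"
  have "fa_mult fa_unit p w = (\<Sum>i\<in>{0}. (if take i w = [] then 1 else 0) * p (drop i w))"
    unfolding fa_mult_def fa_unit_def
    by (rule sum.mono_neutral_right) auto
  then show "fa_mult fa_unit p w = p w" by simp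
qed

lemma fa_mult_unit_right: "fa_mult p fa_unit = p"
proof (rule ext)
  fix w :: "'a rword"
  have "fa_mult p fa_unit w = (\<Sum>i\<in>{length w}. p (take i w) * (if drop i w = [] then 1 else 0))"
    unfolding fa_mult_def fa_unit_def
    by (rule sum.mono_neutral_right) auto
  then show "fa_mult p fa_unit w = p w" by simp
qed

lemma fa_word_mult: "fa_mult (fa_word u) (fa_word v) = fa_word (u @ v)"
proof (rule ext)
  fix w :: "'a rword"
  have e: "fa_mult (fa_word u) (fa_word v) w = (\<Sum>i\<le>length w. (if take i w = u \<and> drop i w = v then 1 else 0))"
    unfolding fa_mult_def fa_word_def by (auto intro!: sum.cong)
  show "fa_mult (fa_word u) (fa_word v) w = fa_word (u @ v) w"
  proof (cases "w = u @ v")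
    case True
    have "(\<Sum>i\<le>length w. (if take i w = u \<and> drop i w = v then 1 else 0)) =
       (\<Sum>i\<in>{length u}. (if take i w = u \<and> drop i w = v then 1 else (0::complex)))"
    proof (rule sum.mono_neutral_right)
      show "\<forall>i\<in>{..length w} - {length u}. (if take i w = u \<and> drop i w = v then 1 else (0::complex)) = 0"
      proof
        fix i assume i: "i \<in> {..length w} - {length u}"
        have "take i w \<noteq> u"
        proof
          assume "take i w = u"
          then have "length u = i" using i by auto
          then show False using i by auto
        qed
        then show "(if take i w = u \<and> drop i w = v then 1 else (0::complex)) = 0" by simp
      qed
    qed (auto simp: True)
    then show ?thesis using e True by (simp add: fa_word_def)
  next
    case False
    have nn: "\<And>i. \<not> (take i w = u \<and> drop i w = v)" using False by (metis append_take_drop_id)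
    have "(\<Sum>i\<le>length w. (if take i w = u \<and> drop i w = v then 1 else (0::complex))) = 0"
      using nn by (simp add: sum.neutral)
    then show ?thesis using e False by (simp add: fa_word_def)
  qed
qed

lemma fa_gen_eq_word: "fa_gen l f = fa_word [(l,f)]" unfolding fa_gen_def fa_word_def by simp
lemma fa_unit_eq_word: "fa_unit = fa_word []" unfolding fa_unit_def fa_word_def by simp

lemma fa_word_Cons: "fa_word (x # w) = fa_mult (fa_gen (fst x) (snd x)) (fa_word w)"
  by (simp add: fa_gen_eq_word fa_word_mult)

definition word_adj :: "'a rword \<Rightarrow> 'a rword" where "word_adj w = rev (map (\<lambda>(l, f). (- l, f)) w)"

lemma word_adj_adj[simp]: "word_adj (word_adj w) = w"
  unfolding word_adj_def by (induct w) (auto simp: rev_map comp_def case_prod_beta)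
lemma length_word_adj[simp]: "length (word_adj w) = length w" unfolding word_adj_def by simp

lemma fa_star_eq_word_adj: "fa_star p = (\<lambda>w. cnj (p (word_adj w)))" unfolding fa_star_def word_adj_def by simp

lemma take_word_adj: "take i (word_adj w) = word_adj (drop (length w - i) w)"
  unfolding word_adj_def by (simp add: take_rev drop_map)
lemma drop_word_adj: "drop i (word_adj w) = word_adj (take (length w - i) w)"
  unfolding word_adj_def by (simp add: drop_rev take_map)

lemma fa_star_mult: "fa_star (fa_mult p q) = fa_mult (fa_star q) (fa_star p)"
proof (rule ext)
  fix w :: "'a rword"
  define n where "n = length w"
  have "fa_star (fa_mult p q) w = (\<Sum>i\<le>n. cnj (p (word_adj (drop (n - i) w))) * cnj (q (word_adj (take (n - i) w))))"
    unfolding fa_star_eq_word_adj fa_mult_def n_def by (simp add: take_word_adj drop_word_adj)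
  also have "\<dots> = (\<Sum>i\<le>n. cnj (p (word_adj (drop i w))) * cnj (q (word_adj (take i w))))"
    by (rule sum.reindex_bij_witness[where i="\<lambda>i. n - i" and j="\<lambda>i. n - i"]) auto
  also have "\<dots> = fa_mult (fa_star q) (fa_star p) w"
    unfolding fa_star_eq_word_adj fa_mult_def n_def by (simp add: mult.commute)
  finally show "fa_star (fa_mult p q) w = fa_mult (fa_star q) (fa_star p) w" .
qed

lemma fa_star_add: "fa_star (fa_add p q) = fa_add (fa_star p) (fa_star q)"
  unfolding fa_star_def fa_add_def by simp
lemma fa_star_diff: "fa_star (fa_diff p q) = fa_diff (fa_star p) (fa_star q)"
  unfolding fa_star_def fa_diff_def by simp
lemma fa_star_scale: "fa_star (fa_scale c p) = fa_scale (cnj c) (fa_star p)"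
  unfolding fa_star_def fa_scale_def by simp
lemma word_adj_eq_iff: "word_adj w = u \<longleftrightarrow> w = word_adj u" by (metis word_adj_adj)
lemma fa_star_word: "fa_star (fa_word u) = fa_word (word_adj u)"
  unfolding fa_star_eq_word_adj fa_word_def by (rule ext) (simp add: word_adj_eq_iff)
lemma fa_star_unit: "fa_star fa_unit = fa_unit"
  by (simp add: fa_unit_eq_word fa_star_word word_adj_def)
lemma fa_star_gen: "fa_star (fa_gen l f) = fa_gen (-l) f"
  by (simp add: fa_gen_eq_word fa_star_word word_adj_def)
lemma fa_star_zero: "fa_star fa_zero = fa_zero"
  unfolding fa_star_def fa_zero_def by simp

lemma support_fa_word: "{w. fa_word u w \<noteq> 0} = {u}" unfolding fa_word_def by auto

lemma fa_word_in_carrier: "valid_word u \<Longrightarrow> fa_word u \<in> fa_carrier"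
  unfolding fa_carrier_def valid_word_def by (auto simp: support_fa_word) (auto simp: fa_word_def split: if_splits)

lemma fa_zero_in_carrier: "fa_zero \<in> fa_carrier" unfolding fa_carrier_def fa_zero_def by auto
lemma fa_unit_in_carrier: "fa_unit \<in> fa_carrier" by (simp add: fa_unit_eq_word fa_word_in_carrier valid_word_def)
lemma fa_gen_in_carrier: "l \<noteq> 0 \<Longrightarrow> fa_gen l f \<in> fa_carrier" by (simp add: fa_gen_eq_word fa_word_in_carrier valid_word_def)

lemma fa_add_in_carrier: "p \<in> fa_carrier \<Longrightarrow> q \<in> fa_carrier \<Longrightarrow> fa_add p q \<in> fa_carrier"
proof -
  assume p: "p \<in> fa_carrier" and q: "q \<in> fa_carrier"
  have "{w. fa_add p q w \<noteq> 0} \<subseteq> {w. p w \<noteq> 0} \<union> {w. q w \<noteq> 0}" unfolding fa_add_def by auto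
  then show ?thesis using p q unfolding fa_carrier_def by (auto intro: finite_subset simp: fa_add_def)
qed

lemma fa_scale_in_carrier: "p \<in> fa_carrier \<Longrightarrow> fa_scale c p \<in> fa_carrier"
proof -
  assume p: "p \<in> fa_carrier"
  have "{w. fa_scale c p w \<noteq> 0} \<subseteq> {w. p w \<noteq> 0}" unfolding fa_scale_def by auto
  then show ?thesis using p unfolding fa_carrier_def by (auto intro: finite_subset simp: fa_scale_def)
qed

lemma fa_diff_in_carrier: "p \<in> fa_carrier \<Longrightarrow> q \<in> fa_carrier \<Longrightarrow> fa_diff p q \<in> fa_carrier"
proof -
  assume p: "p \<in> fa_carrier" and q: "q \<in> fa_carrier"
  have "{w. fa_diff p q w \<noteq> 0} \<subseteq> {w. p w \<noteq> 0} \<union> {w. q w \<noteq> 0}" unfolding fa_diff_def by auto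
  then show ?thesis using p q unfolding fa_carrier_def by (auto intro: finite_subset simp: fa_diff_def)
qed

lemma fa_mult_nonzero_split: "fa_mult p q w \<noteq> 0 \<Longrightarrow> \<exists>i. p (take i w) \<noteq> 0 \<and> q (drop i w) \<noteq> 0"
proof (rule ccontr)
  assume a: "fa_mult p q w \<noteq> 0" and b: "\<not> (\<exists>i. p (take i w) \<noteq> 0 \<and> q (drop i w) \<noteq> 0)"
  then have "\<forall>i. p (take i w) * q (drop i w) = 0" by auto
  then have "fa_mult p q w = 0" unfolding fa_mult_def by (simp add: sum.neutral)
  then show False using a by simp
qed

lemma fa_mult_in_carrier: "p \<in> fa_carrier \<Longrightarrow> q \<in> fa_carrier \<Longrightarrow> fa_mult p q \<in> fa_carrier"
proof -
  assume p: "p \<in> fa_carrier" and q: "q \<in> fa_carrier"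
  have "{w. fa_mult p q w \<noteq> 0} \<subseteq> (\<lambda>(u,v). u @ v) ` ({w. p w \<noteq> 0} \<times> {w. q w \<noteq> 0})"
  proof
    fix w assume "w \<in> {w. fa_mult p q w \<noteq> 0}"
    then obtain i where "p (take i w) \<noteq> 0" "q (drop i w) \<noteq> 0" using fa_mult_nonzero_split by blast
    then show "w \<in> (\<lambda>(u,v). u @ v) ` ({w. p w \<noteq> 0} \<times> {w. q w \<noteq> 0})"
      by (intro image_eqI[where x="(take i w, drop i w)"]) auto
  qed
  moreover have "finite ((\<lambda>(u,v). u @ v) ` ({w. p w \<noteq> 0} \<times> {w. q w \<noteq> 0}))"
    using p q unfolding fa_carrier_def by auto
  ultimately have fin: "finite {w. fa_mult p q w \<noteq> 0}" by (rule finite_subset)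
  have "\<forall>w. fa_mult p q w \<noteq> 0 \<longrightarrow> (\<forall>x\<in>set w. fst x \<noteq> 0)"
  proof (intro allI impI ballI)
    fix w x assume "fa_mult p q w \<noteq> 0" "x \<in> set w"
    then obtain i where i: "p (take i w) \<noteq> 0" "q (drop i w) \<noteq> 0" using fa_mult_nonzero_split by blast
    have "x \<in> set (take i w) \<or> x \<in> set (drop i w)" using \<open>x \<in> set w\<close>
      by (metis Un_iff append_take_drop_id set_append)
    then show "fst x \<noteq> 0" using i p q unfolding fa_carrier_def by blast
  qed
  then show ?thesis using fin unfolding fa_carrier_def by auto
qed

lemma fa_star_in_carrier: "p \<in> fa_carrier \<Longrightarrow> fa_star p \<in> fa_carrier"
proof -
  assume p: "p \<in> fa_carrier"
  have "{w. fa_star p w \<noteq> 0} = word_adj ` {w. p w \<noteq> 0}"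
    unfolding fa_star_eq_word_adj by (auto simp: image_iff) (metis word_adj_adj)
  then have fin: "finite {w. fa_star p w \<noteq> 0}" using p unfolding fa_carrier_def by simp
  have "\<forall>w. fa_star p w \<noteq> 0 \<longrightarrow> (\<forall>x\<in>set w. fst x \<noteq> 0)"
  proof (intro allI impI ballI)
    fix w x assume "fa_star p w \<noteq> 0" "x \<in> set w"
    then have "p (word_adj w) \<noteq> 0" unfolding fa_star_eq_word_adj by simp
    then have "\<forall>y\<in>set (word_adj w). fst y \<noteq> 0" using p unfolding fa_carrier_def by blast
    moreover have "(case x of (l, f) \<Rightarrow> (- l, f)) \<in> set (word_adj w)" using \<open>x \<in> set w\<close> unfolding word_adj_def by auto
    ultimately show "fst x \<noteq> 0" by (cases x) fastforce
  qed
  then show ?thesis using fin unfolding fa_carrier_def by auto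
qed

lemmas fa_carrier_intros = fa_zero_in_carrier fa_unit_in_carrier fa_gen_in_carrier fa_add_in_carrier fa_scale_in_carrier fa_diff_in_carrier
  fa_mult_in_carrier fa_star_in_carrier fa_word_in_carrier

lemma fa_add_zero_right: "fa_add p fa_zero = p" unfolding fa_add_def fa_zero_def by simp
lemma fa_scale_one: "fa_scale 1 p = p" unfolding fa_scale_def by simp

lemma fa_span_base: "a \<in> S \<Longrightarrow> a \<in> fa_span S"
  using fa_span.span_step[OF _ fa_span.span_zero, of a S 1] by (simp add: fa_add_zero_right fa_scale_one)

lemma fa_span_add: "p \<in> fa_span S \<Longrightarrow> q \<in> fa_span S \<Longrightarrow> fa_add p q \<in> fa_span S"
proof (induct p rule: fa_span.induct)
  case span_zero then show ?case by (simp add: fa_add_def fa_zero_def)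
next
  case (span_step a p c)
  have "fa_add (fa_add (fa_scale c a) p) q = fa_add (fa_scale c a) (fa_add p q)"
    unfolding fa_add_def by (simp add: add.assoc)
  then show ?case using span_step by (simp add: fa_span.span_step)
qed

lemma fa_span_scale: "p \<in> fa_span S \<Longrightarrow> fa_scale d p \<in> fa_span S"
proof (induct p rule: fa_span.induct)
  case span_zero then show ?case by (simp add: fa_scale_def fa_zero_def fa_span.span_zero[unfolded fa_zero_def])
next
  case (span_step a p c)
  have "fa_scale d (fa_add (fa_scale c a) p) = fa_add (fa_scale (d*c) a) (fa_scale d p)"
    unfolding fa_add_def fa_scale_def by (simp add: algebra_simps)
  then show ?case using span_step by (simp add: fa_span.span_step)
qed

lemma fa_diff_eq_add: "fa_diff p q = fa_add p (fa_scale (-1) q)"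
  unfolding fa_diff_def fa_add_def fa_scale_def by simp

lemma fa_span_diff: "p \<in> fa_span S \<Longrightarrow> q \<in> fa_span S \<Longrightarrow> fa_diff p q \<in> fa_span S"
  by (simp add: fa_diff_eq_add fa_span_add fa_span_scale)

lemma fa_span_in_carrier: assumes "S \<subseteq> fa_carrier" "p \<in> fa_span S" shows "p \<in> fa_carrier"
  using assms(2) by (induct p rule: fa_span.induct) (use assms(1) in \<open>auto intro: fa_carrier_intros\<close>)

definition fa_words :: "'a ralg set" where "fa_words = {fa_word w | w. valid_word w}"

lemma fa_carrier_in_span_words: "p \<in> fa_carrier \<Longrightarrow> p \<in> fa_span fa_words"
proof (induct "card {w. p w \<noteq> 0}" arbitrary: p)
  case 0
  then have "{w. p w \<noteq> 0} = {}" unfolding fa_carrier_def by auto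
  then have "p = fa_zero" unfolding fa_zero_def by auto
  then show ?case by (simp add: fa_span.span_zero)
next
  case (Suc n)
  then obtain w0 where w0: "p w0 \<noteq> 0" by (metis (mono_tags, lifting) Collect_empty_eq card.empty nat.distinct(1))
  define p' where "p' = p(w0 := 0)"
  have fin: "finite {w. p w \<noteq> 0}" using Suc unfolding fa_carrier_def by auto
  have "{w. p' w \<noteq> 0} = {w. p w \<noteq> 0} - {w0}" unfolding p'_def by auto
  then have cp: "card {w. p' w \<noteq> 0} = n" using Suc(2) w0 fin by simp
  have "p' \<in> fa_carrier" using Suc(3) unfolding fa_carrier_def p'_def
    by (auto intro: finite_subset[of _ "{w. p w \<noteq> 0}"])
  then have sp: "p' \<in> fa_span fa_words" using Suc(1) cp by blast
  have vw: "valid_word w0" using Suc(3) w0 unfolding fa_carrier_def valid_word_def by auto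
  have "p = fa_add (fa_scale (p w0) (fa_word w0)) p'"
    unfolding fa_add_def fa_scale_def fa_word_def p'_def by auto
  then show ?case using sp vw by (metis (mono_tags, lifting) fa_words_def fa_span.span_step mem_Collect_eq)
qed

lemma fa_words_subset_carrier: "fa_words \<subseteq> fa_carrier" unfolding fa_words_def by (auto intro: fa_word_in_carrier)

section \<open>The ideal of relations\<close>

definition rel_ideal :: "('a::real_vector \<Rightarrow> 'a \<Rightarrow> real) \<Rightarrow> 'a ralg set" where
  "rel_ideal \<sigma> = fa_span {fa_mult (fa_mult a r) b | a r b. a \<in> fa_carrier \<and> b \<in> fa_carrier \<and> r \<in> resolvent_rels \<sigma>}"

lemma resolvent_rels_in_carrier: "r \<in> resolvent_rels \<sigma> \<Longrightarrow> r \<in> fa_carrier"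
  unfolding resolvent_rels_def
  by (elim UnE CollectE exE conjE; simp only:;
      intro fa_diff_in_carrier fa_mult_in_carrier fa_scale_in_carrier fa_add_in_carrier fa_gen_in_carrier fa_unit_in_carrier; simp)

lemma rel_ideal_in_carrier: "d \<in> rel_ideal \<sigma> \<Longrightarrow> d \<in> fa_carrier"
  unfolding rel_ideal_def
proof (erule fa_span_in_carrier[rotated])
  show "{fa_mult (fa_mult a r) b | a r b. a \<in> fa_carrier \<and> b \<in> fa_carrier \<and> r \<in> resolvent_rels \<sigma>} \<subseteq> fa_carrier"
    using resolvent_rels_in_carrier fa_mult_in_carrier by blast
qed

lemma rel_ideal_zero: "fa_zero \<in> rel_ideal \<sigma>" unfolding rel_ideal_def by (rule fa_span.span_zero)
lemma rel_ideal_add: "p \<in> rel_ideal \<sigma> \<Longrightarrow> q \<in> rel_ideal \<sigma> \<Longrightarrow> fa_add p q \<in> rel_ideal \<sigma>" unfolding rel_ideal_def by (rule fa_span_add)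
lemma rel_ideal_scale: "p \<in> rel_ideal \<sigma> \<Longrightarrow> fa_scale c p \<in> rel_ideal \<sigma>" unfolding rel_ideal_def by (rule fa_span_scale)
lemma rel_ideal_diff: "p \<in> rel_ideal \<sigma> \<Longrightarrow> q \<in> rel_ideal \<sigma> \<Longrightarrow> fa_diff p q \<in> rel_ideal \<sigma>" unfolding rel_ideal_def by (rule fa_span_diff)

lemma rel_ideal_mult_left: assumes "d \<in> rel_ideal \<sigma>" "c \<in> fa_carrier" shows "fa_mult c d \<in> rel_ideal \<sigma>"
  using assms(1) unfolding rel_ideal_def
proof (induct d rule: fa_span.induct)
  case span_zero then show ?case by (simp add: fa_mult_zero_right fa_span.span_zero)
next
  case (span_step g p k)
  then obtain a r b where g: "g = fa_mult (fa_mult a r) b" "a \<in> fa_carrier" "b \<in> fa_carrier" "r \<in> resolvent_rels \<sigma>" by blast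
  have "fa_mult c g = fa_mult (fa_mult (fa_mult c a) r) b" using g by (simp add: fa_mult_assoc)
  then have "fa_mult c g \<in> {fa_mult (fa_mult a r) b | a r b. a \<in> fa_carrier \<and> b \<in> fa_carrier \<and> r \<in> resolvent_rels \<sigma>}"
    using g assms(2) by (blast intro: fa_mult_in_carrier)
  then show ?case using span_step
    by (simp add: fa_mult_add_right fa_mult_scale_right fa_span.span_step)
qed

lemma rel_ideal_mult_right: assumes "d \<in> rel_ideal \<sigma>" "c \<in> fa_carrier" shows "fa_mult d c \<in> rel_ideal \<sigma>"
  using assms(1) unfolding rel_ideal_def
proof (induct d rule: fa_span.induct)
  case span_zero then show ?case by (simp add: fa_mult_zero_left fa_span.span_zero)
next
  case (span_step g p k)
  then obtain a r b where g: "g = fa_mult (fa_mult a r) b" "a \<in> fa_carrier" "b \<in> fa_carrier" "r \<in> resolvent_rels \<sigma>" by blast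
  have "fa_mult g c = fa_mult (fa_mult a r) (fa_mult b c)" using g by (simp add: fa_mult_assoc)
  then have "fa_mult g c \<in> {fa_mult (fa_mult a r) b | a r b. a \<in> fa_carrier \<and> b \<in> fa_carrier \<and> r \<in> resolvent_rels \<sigma>}"
    using g assms(2) by (blast intro: fa_mult_in_carrier)
  then show ?case using span_step
    by (simp add: fa_mult_add_left fa_mult_scale_left fa_span.span_step)
qed

lemma resolvent_rels_in_rel_ideal: "r \<in> resolvent_rels \<sigma> \<Longrightarrow> r \<in> rel_ideal \<sigma>"
proof -
  assume r: "r \<in> resolvent_rels \<sigma>"
  have e: "r = fa_mult (fa_mult fa_unit r) fa_unit" by (simp add: fa_mult_unit_left fa_mult_unit_right)
  show ?thesis unfolding rel_ideal_def
    by (rule fa_span_base) (use r fa_unit_in_carrier e in blast)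
qed

definition rel_eq :: "('a::real_vector \<Rightarrow> 'a \<Rightarrow> real) \<Rightarrow> 'a ralg \<Rightarrow> 'a ralg \<Rightarrow> bool" where
  "rel_eq \<sigma> x y \<longleftrightarrow> fa_diff x y \<in> rel_ideal \<sigma>"

lemma rel_eq_refl: "rel_eq \<sigma> x x"
proof -
  have "fa_diff x x = fa_zero" by (simp add: fa_diff_def fa_zero_def)
  then show ?thesis unfolding rel_eq_def using rel_ideal_zero by simp
qed
lemma rel_eq_sym: "rel_eq \<sigma> x y \<Longrightarrow> rel_eq \<sigma> y x"
  unfolding rel_eq_def using rel_ideal_scale[of "fa_diff x y" \<sigma> "-1"]
  by (simp add: fa_diff_def fa_scale_def)
lemma rel_eq_trans: "rel_eq \<sigma> x y \<Longrightarrow> rel_eq \<sigma> y z \<Longrightarrow> rel_eq \<sigma> x z"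
  unfolding rel_eq_def using rel_ideal_add[of "fa_diff x y" \<sigma> "fa_diff y z"]
  by (simp add: fa_diff_def fa_add_def)
lemma rel_eq_add: "rel_eq \<sigma> x y \<Longrightarrow> rel_eq \<sigma> x' y' \<Longrightarrow> rel_eq \<sigma> (fa_add x x') (fa_add y y')"
  unfolding rel_eq_def using rel_ideal_add[of "fa_diff x y" \<sigma> "fa_diff x' y'"]
  by (simp add: fa_diff_def fa_add_def algebra_simps)
lemma rel_eq_diff: "rel_eq \<sigma> x y \<Longrightarrow> rel_eq \<sigma> x' y' \<Longrightarrow> rel_eq \<sigma> (fa_diff x x') (fa_diff y y')"
  unfolding rel_eq_def using rel_ideal_diff[of "fa_diff x y" \<sigma> "fa_diff x' y'"]
  by (simp add: fa_diff_def algebra_simps)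
lemma rel_eq_scale: "rel_eq \<sigma> x y \<Longrightarrow> rel_eq \<sigma> (fa_scale c x) (fa_scale c y)"
  unfolding rel_eq_def using rel_ideal_scale[of "fa_diff x y" \<sigma> c]
  by (simp add: fa_diff_def fa_scale_def algebra_simps)
lemma rel_eq_mult_left: "rel_eq \<sigma> x y \<Longrightarrow> c \<in> fa_carrier \<Longrightarrow> rel_eq \<sigma> (fa_mult c x) (fa_mult c y)"
  unfolding rel_eq_def using rel_ideal_mult_left by (metis fa_mult_diff_right)
lemma rel_eq_mult_right: "rel_eq \<sigma> x y \<Longrightarrow> c \<in> fa_carrier \<Longrightarrow> rel_eq \<sigma> (fa_mult x c) (fa_mult y c)"
  unfolding rel_eq_def using rel_ideal_mult_right by (metis fa_mult_diff_left)

section \<open>States and the enveloping seminorm\<close>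

definition state_form :: "('a ralg \<Rightarrow> complex) \<Rightarrow> 'a ralg \<Rightarrow> 'a ralg \<Rightarrow> complex" where
  "state_form \<omega> x y = \<omega> (fa_mult (fa_star x) y)"
definition state_sq :: "('a ralg \<Rightarrow> complex) \<Rightarrow> 'a ralg \<Rightarrow> real" where
  "state_sq \<omega> x = Re (state_form \<omega> x x)"

context
  fixes \<sigma> :: "'a::real_vector \<Rightarrow> 'a \<Rightarrow> real" and \<omega>
  assumes st: "resolvent_state \<sigma> \<omega>"
begin

lemma state_add: "p \<in> fa_carrier \<Longrightarrow> q \<in> fa_carrier \<Longrightarrow> \<omega> (fa_add p q) = \<omega> p + \<omega> q"
  using st unfolding resolvent_state_def by blast
lemma state_scale: "p \<in> fa_carrier \<Longrightarrow> \<omega> (fa_scale c p) = c * \<omega> p"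
  using st unfolding resolvent_state_def by blast
lemma state_unit: "\<omega> fa_unit = 1"
  using st unfolding resolvent_state_def by blast
lemma state_pos: "p \<in> fa_carrier \<Longrightarrow> Im (\<omega> (fa_mult (fa_star p) p)) = 0 \<and> 0 \<le> Re (\<omega> (fa_mult (fa_star p) p))"
  using st unfolding resolvent_state_def by blast
lemma state_rel: "a \<in> fa_carrier \<Longrightarrow> b \<in> fa_carrier \<Longrightarrow> r \<in> resolvent_rels \<sigma> \<Longrightarrow> \<omega> (fa_mult (fa_mult a r) b) = 0"
  using st unfolding resolvent_state_def by blast

lemma state_zero: "\<omega> fa_zero = 0"
proof -
  have e: "fa_zero = fa_scale 0 fa_unit" unfolding fa_zero_def fa_scale_def by simp
  show ?thesis unfolding e using state_scale[OF fa_unit_in_carrier, of 0] by simp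
qed

lemma state_diff: "p \<in> fa_carrier \<Longrightarrow> q \<in> fa_carrier \<Longrightarrow> \<omega> (fa_diff p q) = \<omega> p - \<omega> q"
  by (simp add: fa_diff_eq_add state_add state_scale fa_scale_in_carrier)

lemma state_rel_ideal: assumes "d \<in> rel_ideal \<sigma>" shows "\<omega> d = 0"
  using assms unfolding rel_ideal_def
proof (induct d rule: fa_span.induct)
  case span_zero then show ?case by (rule state_zero)
next
  case (span_step g p k)
  then obtain a r b where g: "g = fa_mult (fa_mult a r) b" "a \<in> fa_carrier" "b \<in> fa_carrier" "r \<in> resolvent_rels \<sigma>" by blast
  have gc: "g \<in> fa_carrier" using g by (auto intro: fa_mult_in_carrier resolvent_rels_in_carrier)
  have pc: "p \<in> fa_carrier" using span_step(2) rel_ideal_in_carrier unfolding rel_ideal_def by blast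
  show ?case using g gc pc span_step(3) state_rel[of a b r] by (simp add: state_add state_scale fa_scale_in_carrier)
qed

lemma state_rel_eq: "rel_eq \<sigma> x y \<Longrightarrow> x \<in> fa_carrier \<Longrightarrow> y \<in> fa_carrier \<Longrightarrow> \<omega> x = \<omega> y"
  unfolding rel_eq_def using state_rel_ideal state_diff by fastforce

lemma state_sq_nonneg: "x \<in> fa_carrier \<Longrightarrow> 0 \<le> state_sq \<omega> x"
  unfolding state_sq_def state_form_def using state_pos by blast

lemma state_form_diag: "x \<in> fa_carrier \<Longrightarrow> state_form \<omega> x x = complex_of_real (state_sq \<omega> x)"
  unfolding state_sq_def state_form_def using state_pos by (simp add: complex_eq_iff)

lemma fa_star_mult_add_scale: "fa_mult (fa_star (fa_add x (fa_scale c y))) (fa_add x (fa_scale c y)) =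
   fa_add (fa_add (fa_mult (fa_star x) x) (fa_scale c (fa_mult (fa_star x) y)))
          (fa_add (fa_scale (cnj c) (fa_mult (fa_star y) x)) (fa_scale (cnj c * c) (fa_mult (fa_star y) y)))"
  by (simp add: fa_star_add fa_star_scale fa_mult_add_left fa_mult_add_right fa_mult_scale_left
      fa_mult_scale_right) (simp add: fa_add_def fa_scale_def algebra_simps)

lemma state_form_add_scale: assumes "x \<in> fa_carrier" "y \<in> fa_carrier"
  shows "state_form \<omega> (fa_add x (fa_scale c y)) (fa_add x (fa_scale c y)) =
    state_form \<omega> x x + c * state_form \<omega> x y + cnj c * state_form \<omega> y x + cnj c * c * state_form \<omega> y y"
  unfolding state_form_def fa_star_mult_add_scale using assms
  by (simp add: state_add state_scale fa_carrier_intros)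

lemma state_sq_add_scaleR: assumes "x \<in> fa_carrier" "y \<in> fa_carrier"
  shows "state_sq \<omega> (fa_add x (fa_scale (complex_of_real t) y)) =
    state_sq \<omega> x + t * Re (state_form \<omega> x y + state_form \<omega> y x) + t^2 * state_sq \<omega> y"
  unfolding state_sq_def using state_form_add_scale[OF assms, of "complex_of_real t"]
  by (simp add: power2_eq_square algebra_simps)

lemma nonneg_quadratic_discriminant:
  fixes a b c :: real
  assumes "\<And>t. 0 \<le> a + t * b + t^2 * c" "0 \<le> c"
  shows "b^2 \<le> 4 * a * c"
proof (cases "c = 0")
  case True
  have "b = 0"
  proof (rule ccontr)
    assume "b \<noteq> 0"
    then have "0 \<le> a + (-(\<bar>a\<bar> + 1)/b) * b" using assms(1)[of "-(\<bar>a\<bar> + 1)/b"] True by simp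
    moreover have "(-(\<bar>a\<bar> + 1)/b) * b = -(\<bar>a\<bar> + 1)" using \<open>b \<noteq> 0\<close> by simp
    ultimately show False by linarith
  qed
  then show ?thesis using True by simp
next
  case False
  then have c: "c > 0" using assms(2) by simp
  have "0 \<le> a + (-b/(2*c)) * b + (-b/(2*c))^2 * c" by (rule assms(1))
  then have "0 \<le> (4*a*c - b^2) / (4*c)" using c by (simp add: field_simps power2_eq_square)
  then show ?thesis using c by (simp add: divide_nonneg_pos zero_le_divide_iff)
qed

lemma state_form_Cauchy_Schwarz: assumes "x \<in> fa_carrier" "y \<in> fa_carrier"
  shows "(Re (state_form \<omega> x y + state_form \<omega> y x))^2 \<le> 4 * state_sq \<omega> x * state_sq \<omega> y"
proof (rule nonneg_quadratic_discriminant)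
  fix t
  show "0 \<le> state_sq \<omega> x + t * Re (state_form \<omega> x y + state_form \<omega> y x) + t^2 * state_sq \<omega> y"
    using state_sq_add_scaleR[OF assms, of t] state_sq_nonneg[of "fa_add x (fa_scale (complex_of_real t) y)"] assms
    by (simp add: fa_carrier_intros)
qed (rule state_sq_nonneg[OF assms(2)])

lemma sqrt_state_sq_add: assumes "x \<in> fa_carrier" "y \<in> fa_carrier"
  shows "sqrt (state_sq \<omega> (fa_add x y)) \<le> sqrt (state_sq \<omega> x) + sqrt (state_sq \<omega> y)"
proof -
  have e: "fa_add x y = fa_add x (fa_scale (complex_of_real 1) y)" by (simp add: fa_scale_one)
  have q: "state_sq \<omega> (fa_add x y) = state_sq \<omega> x + Re (state_form \<omega> x y + state_form \<omega> y x) + state_sq \<omega> y"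
    using state_sq_add_scaleR[OF assms, of 1] e by simp
  have qx: "0 \<le> state_sq \<omega> x" and qy: "0 \<le> state_sq \<omega> y" using state_sq_nonneg assms by auto
  have "\<bar>Re (state_form \<omega> x y + state_form \<omega> y x)\<bar> \<le> 2 * sqrt (state_sq \<omega> x) * sqrt (state_sq \<omega> y)"
  proof -
    have "(Re (state_form \<omega> x y + state_form \<omega> y x))^2 \<le> (2 * sqrt (state_sq \<omega> x) * sqrt (state_sq \<omega> y))^2"
      using state_form_Cauchy_Schwarz[OF assms] qx qy by (simp add: power_mult_distrib)
    moreover have "0 \<le> 2 * sqrt (state_sq \<omega> x) * sqrt (state_sq \<omega> y)" using qx qy by simp
    ultimately show ?thesis using power2_le_iff_abs_le by blast
  qed
  then have "state_sq \<omega> (fa_add x y) \<le> (sqrt (state_sq \<omega> x) + sqrt (state_sq \<omega> y))^2"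
    using q qx qy by (simp add: power2_sum)
  then show ?thesis
    using qx qy by (meson real_le_lsqrt real_sqrt_ge_zero add_nonneg_nonneg)
qed

lemma state_sq_scale: assumes "x \<in> fa_carrier" shows "state_sq \<omega> (fa_scale c x) = (cmod c)^2 * state_sq \<omega> x"
proof -
  have "fa_mult (fa_star (fa_scale c x)) (fa_scale c x) = fa_scale (cnj c * c) (fa_mult (fa_star x) x)"
    by (simp add: fa_star_scale fa_mult_scale_left fa_mult_scale_right) (simp add: fa_scale_def algebra_simps)
  then have "state_form \<omega> (fa_scale c x) (fa_scale c x) = (cnj c * c) * state_form \<omega> x x"
    unfolding state_form_def using assms by (simp add: state_scale fa_carrier_intros)
  moreover have "cnj c * c = complex_of_real ((cmod c)^2)"
    by (metis complex_norm_square mult.commute of_real_power)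
  ultimately have "state_form \<omega> (fa_scale c x) (fa_scale c x) = complex_of_real ((cmod c)^2 * state_sq \<omega> x)"
    using state_form_diag[OF assms] by simp
  then show ?thesis unfolding state_sq_def[of _ "fa_scale c x"] by simp
qed

lemma sqrt_state_sq_scale: assumes "x \<in> fa_carrier" shows "sqrt (state_sq \<omega> (fa_scale c x)) = cmod c * sqrt (state_sq \<omega> x)"
  using state_sq_scale[OF assms] by (simp add: real_sqrt_mult)

lemma state_sq_add_rel_ideal: assumes "x \<in> fa_carrier" "d \<in> rel_ideal \<sigma>" shows "state_sq \<omega> (fa_add x d) = state_sq \<omega> x"
proof -
  have dc: "d \<in> fa_carrier" using rel_ideal_in_carrier assms by blast
  have e: "fa_add x d = fa_add x (fa_scale (complex_of_real 1) d)" by (simp add: fa_scale_one)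
  have q: "state_sq \<omega> (fa_add x d) = state_sq \<omega> x + Re (state_form \<omega> x d + state_form \<omega> d x) + state_sq \<omega> d"
    using state_sq_add_scaleR[OF assms(1) dc, of 1] e by simp
  have dd: "state_sq \<omega> d = 0" unfolding state_sq_def state_form_def
    using state_rel_ideal[OF rel_ideal_mult_left[OF assms(2) fa_star_in_carrier[OF dc]]] by simp
  have xd: "state_form \<omega> x d = 0" unfolding state_form_def
    using state_rel_ideal[OF rel_ideal_mult_left[OF assms(2) fa_star_in_carrier[OF assms(1)]]] by simp
  have "(Re (state_form \<omega> d x + state_form \<omega> x d))^2 \<le> 0" using state_form_Cauchy_Schwarz[OF dc assms(1)] dd by simp
  then have "Re (state_form \<omega> d x + state_form \<omega> x d) = 0" by simp
  then show ?thesis using q dd xd by simp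
qed

lemma state_sq_rel_eq: assumes "x \<in> fa_carrier" "y \<in> fa_carrier" "rel_eq \<sigma> x y" shows "state_sq \<omega> x = state_sq \<omega> y"
proof -
  have "fa_diff x y \<in> rel_ideal \<sigma>" using assms(3) unfolding rel_eq_def .
  then have "state_sq \<omega> (fa_add y (fa_diff x y)) = state_sq \<omega> y" using state_sq_add_rel_ideal assms by blast
  moreover have "fa_add y (fa_diff x y) = x" unfolding fa_add_def fa_diff_def by simp
  ultimately show ?thesis by simp
qed

end

lemma resolvent_identity_rel: "l \<noteq> 0 \<Longrightarrow> m \<noteq> 0 \<Longrightarrow>
  fa_diff (fa_diff (fa_gen l f) (fa_gen m f))
        (fa_scale (\<i> * complex_of_real (m - l)) (fa_mult (fa_gen l f) (fa_gen m f))) \<in> resolvent_rels \<sigma>"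
  unfolding resolvent_rels_def by blast

lemma commutator_rel: "l \<noteq> 0 \<Longrightarrow> m \<noteq> 0 \<Longrightarrow>
  fa_diff (fa_diff (fa_mult (fa_gen l f) (fa_gen m g)) (fa_mult (fa_gen m g) (fa_gen l f)))
        (fa_scale (\<i> * complex_of_real (\<sigma> f g))
          (fa_mult (fa_mult (fa_mult (fa_gen l f) (fa_gen m g)) (fa_gen m g)) (fa_gen l f))) \<in> resolvent_rels \<sigma>"
  unfolding resolvent_rels_def by blast

lemma rel_eq_of_scaled_rel: "r \<in> resolvent_rels \<sigma> \<Longrightarrow> fa_diff x y = fa_scale c r \<Longrightarrow> rel_eq \<sigma> x y"
  unfolding rel_eq_def using resolvent_rels_in_rel_ideal rel_ideal_scale by metis

fun word_weight :: "'a rword \<Rightarrow> real" where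
  "word_weight [] = 1"
| "word_weight (x # w) = word_weight w / (fst x)^2"

text \<open>\<open>k = 1/l - i R(l,f)\<close> satisfies \<open>k\<^sup>* k \<equiv> 1/l\<^sup>2 - R(l,f)\<^sup>* R(l,f)\<close>; positivity of
  \<open>k\<^sup>* k\<close> is what bounds the generators: \<open>\<parallel>R(l,f)\<parallel> \<le> 1/\<bar>l\<bar>\<close>.\<close>

definition gen_complement :: "real \<Rightarrow> 'a \<Rightarrow> 'a ralg" where
  "gen_complement l f = fa_diff (fa_scale (complex_of_real (1/l)) fa_unit) (fa_scale \<i> (fa_gen l f))"

lemma gen_complement_star_mult: assumes l: "l \<noteq> 0"
  shows "rel_eq \<sigma> (fa_mult (fa_star (gen_complement l f)) (gen_complement l f))
     (fa_diff (fa_scale (complex_of_real (1/l^2)) fa_unit) (fa_mult (fa_star (fa_gen l f)) (fa_gen l f)))"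
proof (rule rel_eq_of_scaled_rel[OF resolvent_identity_rel[of "-l" l f]])
  let ?g = "fa_gen l f" and ?h = "fa_gen (-l) f"
  have e1: "fa_mult (fa_star (gen_complement l f)) (gen_complement l f) =
     fa_diff (fa_diff (fa_scale (complex_of_real (1/l^2)) fa_unit) (fa_scale (\<i> / complex_of_real l) ?g))
        (fa_diff (fa_scale (- \<i> / complex_of_real l) ?h) (fa_mult ?h ?g))"
    unfolding gen_complement_def
    by (simp add: fa_star_diff fa_star_scale fa_star_unit fa_star_gen fa_mult_diff_left fa_mult_diff_right
        fa_mult_scale_left fa_mult_scale_right fa_mult_unit_left fa_mult_unit_right)
       (simp add: fa_diff_def fa_scale_def fa_unit_def, rule ext, use l in \<open>simp add: power2_eq_square field_simps\<close>)
  show "fa_diff (fa_mult (fa_star (gen_complement l f)) (gen_complement l f))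
     (fa_diff (fa_scale (complex_of_real (1/l^2)) fa_unit) (fa_mult (fa_star ?g) ?g)) =
    fa_scale (\<i> / complex_of_real l) (fa_diff (fa_diff ?h ?g)
        (fa_scale (\<i> * complex_of_real (l - - l)) (fa_mult ?h ?g)))"
    unfolding e1 fa_star_gen using l
    by (simp add: fa_diff_def fa_scale_def) (rule ext, simp add: field_simps)
qed (use l in auto)

context
  fixes \<sigma> :: "'a::real_vector \<Rightarrow> 'a \<Rightarrow> real" and \<omega>
  assumes st: "resolvent_state \<sigma> \<omega>"
begin

lemma state_sq_gen_mult_le: assumes l: "l \<noteq> 0" and y: "y \<in> fa_carrier"
  shows "state_sq \<omega> (fa_mult (fa_gen l f) y) \<le> state_sq \<omega> y / l^2"
proof -
  let ?g = "fa_gen l f" and ?k = "gen_complement l f"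
  have gc: "?g \<in> fa_carrier" using l by (rule fa_gen_in_carrier)
  have kc: "?k \<in> fa_carrier" unfolding gen_complement_def using l by (simp add: fa_carrier_intros)
  have "rel_eq \<sigma> (fa_mult (fa_star y) (fa_mult (fa_mult (fa_star ?k) ?k) y))
     (fa_mult (fa_star y) (fa_mult (fa_diff (fa_scale (complex_of_real (1/l^2)) fa_unit) (fa_mult (fa_star ?g) ?g)) y))"
    by (intro rel_eq_mult_left rel_eq_mult_right gen_complement_star_mult l y fa_star_in_carrier)
  moreover have "fa_mult (fa_star y) (fa_mult (fa_mult (fa_star ?k) ?k) y) = fa_mult (fa_star (fa_mult ?k y)) (fa_mult ?k y)"
    by (simp add: fa_star_mult fa_mult_assoc)
  moreover have "fa_mult (fa_star y) (fa_mult (fa_diff (fa_scale (complex_of_real (1/l^2)) fa_unit) (fa_mult (fa_star ?g) ?g)) y)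
     = fa_diff (fa_scale (complex_of_real (1/l^2)) (fa_mult (fa_star y) y)) (fa_mult (fa_star (fa_mult ?g y)) (fa_mult ?g y))"
    by (simp add: fa_star_mult fa_mult_assoc fa_mult_diff_left fa_mult_diff_right fa_mult_scale_left
        fa_mult_scale_right fa_mult_unit_left)
  ultimately have "\<omega> (fa_mult (fa_star (fa_mult ?k y)) (fa_mult ?k y)) =
     \<omega> (fa_diff (fa_scale (complex_of_real (1/l^2)) (fa_mult (fa_star y) y)) (fa_mult (fa_star (fa_mult ?g y)) (fa_mult ?g y)))"
    using y gc kc by (intro state_rel_eq[OF st]) (simp_all add: fa_carrier_intros)
  also have "\<dots> = complex_of_real (1/l^2) * state_form \<omega> y y - state_form \<omega> (fa_mult ?g y) (fa_mult ?g y)"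
    unfolding state_form_def using y gc by (simp add: state_diff[OF st] state_scale[OF st] fa_carrier_intros)
  finally have "state_sq \<omega> (fa_mult ?k y) = state_sq \<omega> y / l^2 - state_sq \<omega> (fa_mult ?g y)"
    unfolding state_sq_def state_form_def by simp
  moreover have "0 \<le> state_sq \<omega> (fa_mult ?k y)" using state_sq_nonneg[OF st] kc y by (simp add: fa_carrier_intros)
  ultimately show ?thesis by simp
qed

lemma state_sq_word_mult_le: assumes "valid_word w" "y \<in> fa_carrier"
  shows "state_sq \<omega> (fa_mult (fa_word w) y) \<le> word_weight w * state_sq \<omega> y"
  using assms
proof (induct w)
  case Nil then show ?case by (simp add: fa_unit_eq_word[symmetric] fa_mult_unit_left)
next
  case (Cons x w)
  have vw: "valid_word w" and lx: "fst x \<noteq> 0" using Cons(2) unfolding valid_word_def by auto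
  have wc: "fa_word w \<in> fa_carrier" using vw by (rule fa_word_in_carrier)
  have "state_sq \<omega> (fa_mult (fa_word (x # w)) y) = state_sq \<omega> (fa_mult (fa_gen (fst x) (snd x)) (fa_mult (fa_word w) y))"
    by (simp add: fa_word_Cons fa_mult_assoc)
  also have "\<dots> \<le> state_sq \<omega> (fa_mult (fa_word w) y) / (fst x)^2"
    using state_sq_gen_mult_le lx wc Cons(3) fa_mult_in_carrier by blast
  also have "\<dots> \<le> word_weight w * state_sq \<omega> y / (fst x)^2"
    using Cons vw by (simp add: divide_right_mono)
  finally show ?case by simp
qed

lemma state_sq_unit: "state_sq \<omega> fa_unit = 1"
  unfolding state_sq_def state_form_def by (simp add: fa_star_unit fa_mult_unit_left state_unit[OF st])

lemma state_sq_zero: "state_sq \<omega> fa_zero = 0"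
  unfolding state_sq_def state_form_def by (simp add: fa_star_zero fa_mult_zero_left state_zero[OF st])

end

lemma state_sq_bounded: assumes "x \<in> fa_carrier"
  shows "\<exists>M. \<forall>\<omega>. resolvent_state \<sigma> \<omega> \<longrightarrow> sqrt (state_sq \<omega> x) \<le> M"
proof -
  have "x \<in> fa_span fa_words" using assms by (rule fa_carrier_in_span_words)
  then show ?thesis
  proof (induct x rule: fa_span.induct)
    case span_zero then show ?case using state_sq_zero by (metis order_refl real_sqrt_zero)
  next
    case (span_step a p c)
    then obtain w where w: "a = fa_word w" "valid_word w" unfolding fa_words_def by blast
    obtain M where M: "\<forall>\<omega>. resolvent_state \<sigma> \<omega> \<longrightarrow> sqrt (state_sq \<omega> p) \<le> M" using span_step by blast
    have pc: "p \<in> fa_carrier" using span_step(2) fa_span_in_carrier fa_words_subset_carrier by blast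
    have ac: "a \<in> fa_carrier" using w fa_word_in_carrier by blast
    show ?case
    proof (intro exI allI impI)
      fix \<omega> :: "'a ralg \<Rightarrow> complex" assume st: "resolvent_state \<sigma> \<omega>"
      have "state_sq \<omega> a \<le> word_weight w" using state_sq_word_mult_le[OF st w(2) fa_unit_in_carrier] w
        by (simp add: state_sq_unit[OF st] fa_mult_unit_right)
      then have "sqrt (state_sq \<omega> a) \<le> sqrt (word_weight w)" by simp
      then have "sqrt (state_sq \<omega> (fa_scale c a)) \<le> cmod c * sqrt (word_weight w)"
        using sqrt_state_sq_scale[OF st ac] by (simp add: mult_left_mono)
      moreover have "sqrt (state_sq \<omega> p) \<le> M" using M st by blast
      ultimately show "sqrt (state_sq \<omega> (fa_add (fa_scale c a) p)) \<le> cmod c * sqrt (word_weight w) + M"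
        using sqrt_state_sq_add[OF st fa_scale_in_carrier[OF ac] pc, of c] by linarith
    qed
  qed
qed

lemma resolvent_seminorm_eq_Sup: "resolvent_seminorm \<sigma> x = Sup ((\<lambda>\<omega>. sqrt (state_sq \<omega> x)) ` {\<omega>. resolvent_state \<sigma> \<omega>})"
  unfolding resolvent_seminorm_def state_sq_def state_form_def by simp

lemma state_sq_bdd_above: "x \<in> fa_carrier \<Longrightarrow> bdd_above ((\<lambda>\<omega>. sqrt (state_sq \<omega> x)) ` {\<omega>. resolvent_state \<sigma> \<omega>})"
  using state_sq_bounded[of x \<sigma>] by (auto simp: bdd_above_def)

lemma sqrt_state_sq_le_seminorm: "x \<in> fa_carrier \<Longrightarrow> resolvent_state \<sigma> \<omega> \<Longrightarrow> sqrt (state_sq \<omega> x) \<le> resolvent_seminorm \<sigma> x"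
  unfolding resolvent_seminorm_eq_Sup by (rule cSup_upper) (auto intro: state_sq_bdd_above)

lemma seminorm_le: assumes ex: "\<exists>\<omega>. resolvent_state \<sigma> \<omega>"
  and "\<And>\<omega>. resolvent_state \<sigma> \<omega> \<Longrightarrow> sqrt (state_sq \<omega> x) \<le> M"
  shows "resolvent_seminorm \<sigma> x \<le> M"
  unfolding resolvent_seminorm_eq_Sup using assms by (intro cSup_least) auto

lemma seminorm_rel_eq: assumes "x \<in> fa_carrier" "y \<in> fa_carrier" "rel_eq \<sigma> x y" shows "resolvent_seminorm \<sigma> x = resolvent_seminorm \<sigma> y"
  unfolding resolvent_seminorm_eq_Sup using state_sq_rel_eq[OF _ assms] by (intro arg_cong[where f=Sup] image_cong) auto

text \<open>Without states the seminorm is \<open>Sup {}\<close>, about which nothing is known.\<close>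

context
  fixes \<sigma> :: "'a::real_vector \<Rightarrow> 'a \<Rightarrow> real"
  assumes ex: "\<exists>\<omega>. resolvent_state \<sigma> \<omega>"
begin

lemma seminorm_nonneg: "x \<in> fa_carrier \<Longrightarrow> 0 \<le> resolvent_seminorm \<sigma> x"
  using ex sqrt_state_sq_le_seminorm[of x \<sigma>] by (meson order_trans real_sqrt_ge_zero state_sq_nonneg)

lemma seminorm_add: "x \<in> fa_carrier \<Longrightarrow> y \<in> fa_carrier \<Longrightarrow> resolvent_seminorm \<sigma> (fa_add x y) \<le> resolvent_seminorm \<sigma> x + resolvent_seminorm \<sigma> y"
  by (rule seminorm_le[OF ex]) (meson sqrt_state_sq_add sqrt_state_sq_le_seminorm add_mono order_trans)

lemma seminorm_scale: "x \<in> fa_carrier \<Longrightarrow> resolvent_seminorm \<sigma> (fa_scale c x) \<le> cmod c * resolvent_seminorm \<sigma> x"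
  by (rule seminorm_le[OF ex]) (simp add: sqrt_state_sq_scale sqrt_state_sq_le_seminorm mult_left_mono)

lemma seminorm_diff: "x \<in> fa_carrier \<Longrightarrow> y \<in> fa_carrier \<Longrightarrow> resolvent_seminorm \<sigma> (fa_diff x y) \<le> resolvent_seminorm \<sigma> x + resolvent_seminorm \<sigma> y"
  using seminorm_add[of x "fa_scale (-1) y"] seminorm_scale[of y "-1"] by (simp add: fa_diff_eq_add fa_carrier_intros)

lemma seminorm_unit: "resolvent_seminorm \<sigma> fa_unit \<le> 1"
  by (rule seminorm_le[OF ex]) (simp add: state_sq_unit)

lemma seminorm_zero: "resolvent_seminorm \<sigma> fa_zero = 0"
proof -
  have "resolvent_seminorm \<sigma> fa_zero \<le> 0" by (rule seminorm_le[OF ex]) (simp add: state_sq_zero)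
  then show ?thesis using seminorm_nonneg[OF fa_zero_in_carrier] by simp
qed

lemma seminorm_gen: "l \<noteq> 0 \<Longrightarrow> resolvent_seminorm \<sigma> (fa_gen l f) \<le> 1 / \<bar>l\<bar>"
proof (rule seminorm_le[OF ex])
  fix \<omega> assume l: "l \<noteq> 0" and st: "resolvent_state \<sigma> \<omega>"
  have "state_sq \<omega> (fa_gen l f) \<le> 1 / l^2"
    using state_sq_gen_mult_le[OF st l fa_unit_in_carrier, of f] by (simp add: state_sq_unit[OF st] fa_mult_unit_right)
  then have "sqrt (state_sq \<omega> (fa_gen l f)) \<le> sqrt (1 / l^2)" by simp
  then show "sqrt (state_sq \<omega> (fa_gen l f)) \<le> 1 / \<bar>l\<bar>" by (simp add: real_sqrt_divide)
qed

end

text \<open>The \<open>+ t\<close> keeps the vector state normalisable when \<open>\<omega>(y\<^sup>* y) = 0\<close>.\<close>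

definition vector_state :: "('a ralg \<Rightarrow> complex) \<Rightarrow> 'a ralg \<Rightarrow> real \<Rightarrow> 'a ralg \<Rightarrow> complex" where
  "vector_state \<omega> y t z = (\<omega> (fa_mult (fa_star y) (fa_mult z y)) + complex_of_real t * \<omega> z) / complex_of_real (state_sq \<omega> y + t)"

lemma vector_state_is_state: fixes y :: "(real \<times> 'a::real_vector) list \<Rightarrow> complex" assumes st: "resolvent_state \<sigma> \<omega>" and y: "y \<in> fa_carrier" and t: "t > 0"
  shows "resolvent_state \<sigma> (vector_state \<omega> y t)"
proof -
  have r: "0 \<le> state_sq \<omega> y" using state_sq_nonneg[OF st y] .
  have ys: "fa_star y \<in> fa_carrier" using y by (rule fa_star_in_carrier)
  have den: "state_sq \<omega> y + t > 0" using r t by simp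
  have A: "\<forall>p\<in>fa_carrier. \<forall>q\<in>fa_carrier. vector_state \<omega> y t (fa_add p q) = vector_state \<omega> y t p + vector_state \<omega> y t q"
    unfolding vector_state_def using y ys
    by (simp add: fa_mult_add_left fa_mult_add_right state_add[OF st] fa_carrier_intros add_divide_distrib algebra_simps)
  have S: "\<forall>c. \<forall>p\<in>fa_carrier. vector_state \<omega> y t (fa_scale c p) = c * vector_state \<omega> y t p"
    unfolding vector_state_def using y ys
    by (simp add: fa_mult_scale_left fa_mult_scale_right state_scale[OF st] fa_carrier_intros algebra_simps)
  have U: "vector_state \<omega> y t fa_unit = 1"
  proof -
    have num: "\<omega> (fa_mult (fa_star y) (fa_mult fa_unit y)) + complex_of_real t * \<omega> fa_unit = complex_of_real (state_sq \<omega> y + t)"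
      using state_form_diag[OF st y] by (simp add: fa_mult_unit_left state_unit[OF st] state_form_def)
    have nz: "complex_of_real (state_sq \<omega> y + t) \<noteq> 0" using den by (simp only: of_real_eq_0_iff)
    show ?thesis unfolding vector_state_def num using nz by (rule divide_self)
  qed
  have P: "\<forall>p\<in>fa_carrier. Im (vector_state \<omega> y t (fa_mult (fa_star p) p)) = 0 \<and> 0 \<le> Re (vector_state \<omega> y t (fa_mult (fa_star p) p))"
  proof
    fix p :: "(real \<times> 'a) list \<Rightarrow> complex" assume p: "p \<in> fa_carrier"
    have e: "fa_mult (fa_star y) (fa_mult (fa_mult (fa_star p) p) y) = fa_mult (fa_star (fa_mult p y)) (fa_mult p y)"
      by (simp add: fa_star_mult fa_mult_assoc)
    have "vector_state \<omega> y t (fa_mult (fa_star p) p) = complex_of_real ((state_sq \<omega> (fa_mult p y) + t * state_sq \<omega> p) / (state_sq \<omega> y + t))"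
      unfolding vector_state_def e using state_form_diag[OF st p] state_form_diag[OF st fa_mult_in_carrier[OF p y]]
      by (simp add: state_form_def)
    moreover have "0 \<le> (state_sq \<omega> (fa_mult p y) + t * state_sq \<omega> p) / (state_sq \<omega> y + t)"
      using state_sq_nonneg[OF st p] state_sq_nonneg[OF st fa_mult_in_carrier[OF p y]] den t by simp
    ultimately show "Im (vector_state \<omega> y t (fa_mult (fa_star p) p)) = 0 \<and> 0 \<le> Re (vector_state \<omega> y t (fa_mult (fa_star p) p))"
      by simp
  qed
  have R: "\<forall>a\<in>fa_carrier. \<forall>b\<in>fa_carrier. \<forall>r\<in>resolvent_rels \<sigma>. vector_state \<omega> y t (fa_mult (fa_mult a r) b) = 0"
  proof (intro ballI)
    fix a b r :: "(real \<times> 'a) list \<Rightarrow> complex" assume a: "a \<in> fa_carrier" and b: "b \<in> fa_carrier" and r: "r \<in> resolvent_rels \<sigma>"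
    have "fa_mult (fa_star y) (fa_mult (fa_mult (fa_mult a r) b) y) = fa_mult (fa_mult (fa_mult (fa_star y) a) r) (fa_mult b y)"
      by (simp add: fa_mult_assoc)
    then show "vector_state \<omega> y t (fa_mult (fa_mult a r) b) = 0"
      unfolding vector_state_def using state_rel[OF st a b r] state_rel[OF st fa_mult_in_carrier[OF ys a] fa_mult_in_carrier[OF b y] r]
      by simp
  qed
  show ?thesis unfolding resolvent_state_def using A S U P R by blast
qed

lemma state_sq_mult_le: assumes st: "resolvent_state \<sigma> \<omega>" and x: "x \<in> fa_carrier" and y: "y \<in> fa_carrier"
  shows "state_sq \<omega> (fa_mult x y) \<le> (resolvent_seminorm \<sigma> x)^2 * state_sq \<omega> y"
proof (rule ccontr)
  let ?N = "resolvent_seminorm \<sigma> x" and ?a = "state_sq \<omega> (fa_mult x y)" and ?b = "state_sq \<omega> x" and ?r = "state_sq \<omega> y"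
  assume "\<not> ?a \<le> ?N^2 * ?r"
  then have gap: "?a - ?N^2 * ?r > 0" by simp
  have b0: "0 \<le> ?b" using state_sq_nonneg[OF st x] .
  have r0: "0 \<le> ?r" using state_sq_nonneg[OF st y] .
  define t where "t = (?a - ?N^2 * ?r) / (?N^2 + 1)"
  have t: "t > 0" unfolding t_def using gap by (intro divide_pos_pos) (simp_all add: add_pos_nonneg add_nonneg_pos)
  have "resolvent_state \<sigma> (vector_state \<omega> y t)" using vector_state_is_state[OF st y t] .
  then have "sqrt (state_sq (vector_state \<omega> y t) x) \<le> ?N" using sqrt_state_sq_le_seminorm[OF x] by blast
  moreover have e: "fa_mult (fa_star y) (fa_mult (fa_mult (fa_star x) x) y) = fa_mult (fa_star (fa_mult x y)) (fa_mult x y)"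
    by (simp add: fa_star_mult fa_mult_assoc)
  have "state_sq (vector_state \<omega> y t) x = (?a + t * ?b) / (?r + t)"
    unfolding state_sq_def[of "vector_state \<omega> y t"] state_form_def[of "vector_state \<omega> y t"] vector_state_def e
    using state_form_diag[OF st x] state_form_diag[OF st fa_mult_in_carrier[OF x y]]
    by (simp add: state_form_def)
  ultimately have "sqrt ((?a + t * ?b) / (?r + t)) \<le> ?N" by simp
  then have "(?a + t * ?b) / (?r + t) \<le> ?N^2"
    using real_sqrt_le_iff by (metis real_le_rsqrt real_sqrt_ge_zero order_trans sqrt_le_D)
  then have "?a + t * ?b \<le> ?N^2 * (?r + t)" using r0 t by (simp add: divide_le_eq)
  then have "?a - ?N^2 * ?r \<le> t * (?N^2 - ?b)" by (simp add: algebra_simps)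
  also have "\<dots> \<le> t * ?N^2" using t b0 by (simp add: mult_left_mono)
  finally have "?a - ?N^2 * ?r \<le> t * ?N^2" .
  moreover have "t * ?N^2 < ?a - ?N^2 * ?r"
  proof -
    have "t * ?N^2 = (?a - ?N^2 * ?r) * (?N^2 / (?N^2 + 1))" unfolding t_def by simp
    also have "\<dots> < (?a - ?N^2 * ?r) * 1"
    proof (intro mult_strict_left_mono)
      have "0 < ?N^2 + 1" by (simp add: add_nonneg_pos)
      then show "?N^2 / (?N^2 + 1) < 1" by (simp add: divide_less_eq_1_pos)
    qed (use gap in simp)
    finally show ?thesis by simp
  qed
  ultimately show False by simp
qed

lemma seminorm_mult: assumes ex: "\<exists>\<omega>. resolvent_state \<sigma> \<omega>" and x: "x \<in> fa_carrier" and y: "y \<in> fa_carrier"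
  shows "resolvent_seminorm \<sigma> (fa_mult x y) \<le> resolvent_seminorm \<sigma> x * resolvent_seminorm \<sigma> y"
proof (rule seminorm_le[OF ex])
  fix \<omega> assume st: "resolvent_state \<sigma> \<omega>"
  have "sqrt (state_sq \<omega> (fa_mult x y)) \<le> sqrt ((resolvent_seminorm \<sigma> x)^2 * state_sq \<omega> y)"
    using state_sq_mult_le[OF st x y] by simp
  also have "\<dots> = resolvent_seminorm \<sigma> x * sqrt (state_sq \<omega> y)" using seminorm_nonneg[OF ex x] by (simp add: real_sqrt_mult)
  also have "\<dots> \<le> resolvent_seminorm \<sigma> x * resolvent_seminorm \<sigma> y" using seminorm_nonneg[OF ex x] sqrt_state_sq_le_seminorm[OF y st] by (simp add: mult_left_mono)
  finally show "sqrt (state_sq \<omega> (fa_mult x y)) \<le> resolvent_seminorm \<sigma> x * resolvent_seminorm \<sigma> y" .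
qed

section \<open>The character at the origin\<close>

fun zero_char_word :: "'a::zero rword \<Rightarrow> complex" where
  "zero_char_word [] = 1"
| "zero_char_word (x # w) = (if snd x = 0 then - \<i> / complex_of_real (fst x) else 0) * zero_char_word w"

definition zero_char :: "'a::zero ralg \<Rightarrow> complex" where
  "zero_char p = (\<Sum>w\<in>{w. p w \<noteq> 0}. p w * zero_char_word w)"

lemma zero_char_eq_sum: "finite F \<Longrightarrow> {w. p w \<noteq> 0} \<subseteq> F \<Longrightarrow> zero_char p = (\<Sum>w\<in>F. p w * zero_char_word w)"
  unfolding zero_char_def by (rule sum.mono_neutral_left) auto

lemma finite_support: "p \<in> fa_carrier \<Longrightarrow> finite {w. p w \<noteq> 0}" unfolding fa_carrier_def by auto

lemma zero_char_add: assumes "p \<in> fa_carrier" "q \<in> fa_carrier" shows "zero_char (fa_add p q) = zero_char p + zero_char q"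
proof -
  let ?F = "{w. p w \<noteq> 0} \<union> {w. q w \<noteq> 0}"
  have f: "finite ?F" using assms finite_support by blast
  have "zero_char (fa_add p q) = (\<Sum>w\<in>?F. fa_add p q w * zero_char_word w)" by (rule zero_char_eq_sum[OF f]) (auto simp: fa_add_def)
  also have "\<dots> = (\<Sum>w\<in>?F. p w * zero_char_word w) + (\<Sum>w\<in>?F. q w * zero_char_word w)"
    by (simp add: fa_add_def distrib_right sum.distrib)
  also have "\<dots> = zero_char p + zero_char q" using zero_char_eq_sum[OF f, of p] zero_char_eq_sum[OF f, of q] by auto
  finally show ?thesis .
qed

lemma zero_char_scale: assumes "p \<in> fa_carrier" shows "zero_char (fa_scale c p) = c * zero_char p"
proof -
  let ?F = "{w. p w \<noteq> 0}"
  have f: "finite ?F" using assms finite_support by blast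
  have "zero_char (fa_scale c p) = (\<Sum>w\<in>?F. fa_scale c p w * zero_char_word w)" by (rule zero_char_eq_sum[OF f]) (auto simp: fa_scale_def)
  also have "\<dots> = c * zero_char p" unfolding zero_char_def by (simp add: fa_scale_def sum_distrib_left mult.assoc)
  finally show ?thesis .
qed

lemma zero_char_diff: "p \<in> fa_carrier \<Longrightarrow> q \<in> fa_carrier \<Longrightarrow> zero_char (fa_diff p q) = zero_char p - zero_char q"
  by (simp add: fa_diff_eq_add zero_char_add zero_char_scale fa_scale_in_carrier)

lemma zero_char_word_eq: "zero_char (fa_word u) = zero_char_word u"
  unfolding zero_char_def support_fa_word by (simp add: fa_word_def)

lemma zero_char_word_append: "zero_char_word (u @ v) = zero_char_word u * zero_char_word v" by (induct u) auto

lemma zero_char_word_adj: "zero_char_word (word_adj w) = cnj (zero_char_word w)"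
proof (induct w)
  case Nil then show ?case by (simp add: word_adj_def)
next
  case (Cons x w)
  have "word_adj (x # w) = word_adj w @ [(- fst x, snd x)]" unfolding word_adj_def by (cases x) simp
  then show ?case using Cons by (simp add: zero_char_word_append mult.commute)
qed

lemma zero_char_zero: "zero_char fa_zero = 0" unfolding zero_char_def fa_zero_def by simp

lemma zero_char_word_mult: assumes "q \<in> fa_carrier" "valid_word u" shows "zero_char (fa_mult (fa_word u) q) = zero_char_word u * zero_char q"
proof -
  have "q \<in> fa_span fa_words" using assms(1) by (rule fa_carrier_in_span_words)
  then show ?thesis
  proof (induct q rule: fa_span.induct)
    case span_zero then show ?case by (simp add: fa_mult_zero_right zero_char_zero)
  next
    case (span_step a p c)
    then obtain v where v: "a = fa_word v" "valid_word v" unfolding fa_words_def by blast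
    have pc: "p \<in> fa_carrier" using span_step(2) fa_span_in_carrier fa_words_subset_carrier by blast
    have uv: "valid_word (u @ v)" using v assms(2) unfolding valid_word_def by auto
    have "zero_char (fa_mult (fa_word u) (fa_add (fa_scale c a) p)) = zero_char (fa_add (fa_scale c (fa_word (u @ v))) (fa_mult (fa_word u) p))"
      by (simp add: fa_mult_add_right fa_mult_scale_right v fa_word_mult)
    also have "\<dots> = c * zero_char_word (u @ v) + zero_char_word u * zero_char p"
      using span_step(3) pc uv assms(2) by (simp add: zero_char_add zero_char_scale fa_carrier_intros zero_char_word_eq)
    also have "\<dots> = zero_char_word u * zero_char (fa_add (fa_scale c a) p)"
      using pc v by (simp add: zero_char_add zero_char_scale fa_carrier_intros zero_char_word_eq zero_char_word_append algebra_simps)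
    finally show ?case .
  qed
qed

lemma zero_char_mult: assumes "p \<in> fa_carrier" "q \<in> fa_carrier" shows "zero_char (fa_mult p q) = zero_char p * zero_char q"
proof -
  have "p \<in> fa_span fa_words" using assms(1) by (rule fa_carrier_in_span_words)
  then show ?thesis
  proof (induct p rule: fa_span.induct)
    case span_zero then show ?case by (simp add: fa_mult_zero_left zero_char_zero)
  next
    case (span_step a p c)
    then obtain v where v: "a = fa_word v" "valid_word v" unfolding fa_words_def by blast
    have pc: "p \<in> fa_carrier" using span_step(2) fa_span_in_carrier fa_words_subset_carrier by blast
    have "zero_char (fa_mult (fa_add (fa_scale c a) p) q) = zero_char (fa_add (fa_scale c (fa_mult (fa_word v) q)) (fa_mult p q))"
      by (simp add: fa_mult_add_left fa_mult_scale_left v)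
    also have "\<dots> = c * (zero_char_word v * zero_char q) + zero_char p * zero_char q"
      using span_step(3) pc v assms(2) by (simp add: zero_char_add zero_char_scale fa_carrier_intros zero_char_word_mult)
    also have "\<dots> = zero_char (fa_add (fa_scale c a) p) * zero_char q"
      using pc v by (simp add: zero_char_add zero_char_scale fa_carrier_intros zero_char_word_eq algebra_simps)
    finally show ?case .
  qed
qed

lemma zero_char_star: assumes "p \<in> fa_carrier" shows "zero_char (fa_star p) = cnj (zero_char p)"
proof -
  have "p \<in> fa_span fa_words" using assms(1) by (rule fa_carrier_in_span_words)
  then show ?thesis
  proof (induct p rule: fa_span.induct)
    case span_zero then show ?case by (simp add: fa_star_zero zero_char_zero)
  next
    case (span_step a p c)
    then obtain v where v: "a = fa_word v" "valid_word v" unfolding fa_words_def by blast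
    have pc: "p \<in> fa_carrier" using span_step(2) fa_span_in_carrier fa_words_subset_carrier by blast
    have vr: "valid_word (word_adj v)" using v(2) unfolding valid_word_def word_adj_def by auto
    show ?case using span_step(3) pc v vr
      by (simp add: fa_star_add fa_star_scale fa_star_word zero_char_add zero_char_scale fa_carrier_intros zero_char_word_eq zero_char_word_adj)
  qed
qed

lemma zero_char_unit: "zero_char fa_unit = 1" by (simp add: fa_unit_eq_word zero_char_word_eq)
lemma zero_char_gen: "zero_char (fa_gen l f) = (if f = 0 then - \<i> / complex_of_real l else 0)"
  by (simp add: fa_gen_eq_word zero_char_word_eq)

lemma symplectic_form_zero: "symplectic_form \<sigma> \<Longrightarrow> \<sigma> 0 0 = 0"
  unfolding symplectic_form_def by (metis add.inverse_neutral neg_equal_zero)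

lemma zero_char_rel: assumes sy: "symplectic_form \<sigma>" and "r \<in> resolvent_rels \<sigma>" shows "zero_char r = 0"
  using assms(2) unfolding resolvent_rels_def
proof (elim UnE CollectE exE conjE)
  fix l assume "r = fa_diff (fa_gen l 0) (fa_scale (- \<i> / complex_of_real l) fa_unit)" "l \<noteq> 0"
  then show "zero_char r = 0" by (simp add: zero_char_diff zero_char_scale zero_char_gen zero_char_unit fa_carrier_intros)
next
  fix \<nu> l f assume "r = fa_diff (fa_scale (complex_of_real \<nu>) (fa_gen (\<nu> * l) (\<nu> *\<^sub>R f))) (fa_gen l f)" "\<nu> \<noteq> 0" "l \<noteq> 0"
  then show "zero_char r = 0" by (simp add: zero_char_diff zero_char_scale zero_char_gen zero_char_unit fa_carrier_intros field_simps)
next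
  fix l m f assume "r = fa_diff (fa_diff (fa_gen l f) (fa_gen m f))
        (fa_scale (\<i> * complex_of_real (m - l)) (fa_mult (fa_gen l f) (fa_gen m f)))" "l \<noteq> 0" "m \<noteq> 0"
  then show "zero_char r = 0" by (simp add: zero_char_diff zero_char_scale zero_char_mult zero_char_gen zero_char_unit fa_carrier_intros field_simps)
next
  fix l m f g assume "r = fa_diff (fa_diff (fa_mult (fa_gen l f) (fa_gen m g)) (fa_mult (fa_gen m g) (fa_gen l f)))
        (fa_scale (\<i> * complex_of_real (\<sigma> f g))
          (fa_mult (fa_mult (fa_mult (fa_gen l f) (fa_gen m g)) (fa_gen m g)) (fa_gen l f)))" "l \<noteq> 0" "m \<noteq> 0"
  then show "zero_char r = 0" by (simp add: zero_char_diff zero_char_scale zero_char_mult zero_char_gen zero_char_unit fa_carrier_intros symplectic_form_zero[OF sy])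
next
  fix l m f g assume "r = fa_diff (fa_mult (fa_gen l f) (fa_gen m g))
        (fa_mult (fa_gen (l + m) (f + g))
          (fa_add (fa_add (fa_gen l f) (fa_gen m g))
            (fa_scale (\<i> * complex_of_real (\<sigma> f g))
               (fa_mult (fa_mult (fa_gen l f) (fa_gen l f)) (fa_gen m g)))))" "l \<noteq> 0" "m \<noteq> 0" "l + m \<noteq> 0"
  moreover have lm: "complex_of_real l + complex_of_real m \<noteq> 0" using \<open>l + m \<noteq> 0\<close>
    by (metis of_real_add of_real_eq_0_iff)
  moreover have "complex_of_real l * (complex_of_real l * complex_of_real m) + complex_of_real l * (complex_of_real m * complex_of_real m) \<noteq> 0"
  proof -
    have "complex_of_real l * (complex_of_real l * complex_of_real m) + complex_of_real l * (complex_of_real m * complex_of_real m)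
      = complex_of_real l * complex_of_real m * (complex_of_real l + complex_of_real m)" by (simp add: algebra_simps)
    then show ?thesis using lm \<open>l \<noteq> 0\<close> \<open>m \<noteq> 0\<close> by simp
  qed
  ultimately show "zero_char r = 0" 
    by (simp add: zero_char_diff zero_char_scale zero_char_mult zero_char_add zero_char_gen zero_char_unit fa_carrier_intros symplectic_form_zero[OF sy])
       (auto simp: field_simps)
qed

lemma zero_char_state: fixes \<sigma> :: "'a::real_vector \<Rightarrow> 'a \<Rightarrow> real" assumes sy: "symplectic_form \<sigma>"
  shows "resolvent_state \<sigma> zero_char"
  unfolding resolvent_state_def
proof (intro conjI ballI allI)
  fix p :: "(real \<times> 'a) list \<Rightarrow> complex" assume p: "p \<in> fa_carrier"
  have "zero_char (fa_mult (fa_star p) p) = complex_of_real ((cmod (zero_char p))^2)"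
    using p by (simp add: zero_char_mult zero_char_star fa_carrier_intros)
      (metis complex_norm_square mult.commute of_real_power)
  then show "Im (zero_char (fa_mult (fa_star p) p)) = 0" "0 \<le> Re (zero_char (fa_mult (fa_star p) p))" by simp_all
next
  fix a b r :: "(real \<times> 'a) list \<Rightarrow> complex" assume "a \<in> fa_carrier" "b \<in> fa_carrier" "r \<in> resolvent_rels \<sigma>"
  then show "zero_char (fa_mult (fa_mult a r) b) = 0"
    by (simp add: zero_char_mult zero_char_rel[OF sy] fa_carrier_intros resolvent_rels_in_carrier)
qed (simp_all add: zero_char_add zero_char_scale zero_char_unit)

lemma resolvent_state_exists: "symplectic_form \<sigma> \<Longrightarrow> \<exists>\<omega>. resolvent_state \<sigma> \<omega>" using zero_char_state by blast

section \<open>One-sided ideals generated by a resolvent\<close>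

lemma gen_commute_left: assumes l: "l \<noteq> 0" and m: "m \<noteq> 0"
  shows "rel_eq \<sigma> (fa_mult (fa_gen l f) (fa_gen m g))
     (fa_mult (fa_add (fa_gen m g) (fa_scale (\<i> * complex_of_real (\<sigma> f g)) (fa_mult (fa_mult (fa_gen l f) (fa_gen m g)) (fa_gen m g)))) (fa_gen l f))"
  by (rule rel_eq_of_scaled_rel[OF commutator_rel[OF l m, of f g \<sigma>], of _ _ 1])
     (simp only: fa_mult_add_left fa_mult_scale_left fa_mult_assoc, simp add: fa_diff_def fa_add_def fa_scale_def algebra_simps)

lemma gen_commute_right: assumes l: "l \<noteq> 0" and m: "m \<noteq> 0"
  shows "rel_eq \<sigma> (fa_mult (fa_gen m g) (fa_gen l f))
     (fa_mult (fa_gen l f) (fa_diff (fa_gen m g) (fa_scale (\<i> * complex_of_real (\<sigma> f g)) (fa_mult (fa_mult (fa_gen m g) (fa_gen m g)) (fa_gen l f)))))"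
  by (rule rel_eq_of_scaled_rel[OF commutator_rel[OF l m, of f g \<sigma>], of _ _ "-1"])
     (simp only: fa_mult_diff_right fa_mult_scale_right fa_mult_assoc, simp add: fa_diff_def fa_add_def fa_scale_def algebra_simps)

context
  fixes \<sigma> :: "'a::real_vector \<Rightarrow> 'a \<Rightarrow> real" and l :: real and f :: 'a
  assumes l: "l \<noteq> 0"
begin

lemma word_mult_gen_rel_eq: "valid_word w \<Longrightarrow> \<exists>c\<in>fa_carrier. rel_eq \<sigma> (fa_mult (fa_word w) (fa_gen l f)) (fa_mult (fa_gen l f) c)"
proof (induct w)
  case Nil then show ?case
    by (intro bexI[of _ fa_unit]) (simp_all add: fa_unit_eq_word[symmetric] fa_mult_unit_left fa_mult_unit_right rel_eq_refl fa_unit_in_carrier)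
next
  case (Cons x w)
  let ?g = "fa_gen l f" and ?h = "fa_gen (fst x) (snd x)"
  have vw: "valid_word w" and lx: "fst x \<noteq> 0" using Cons(2) unfolding valid_word_def by auto
  obtain c where c: "c \<in> fa_carrier" "rel_eq \<sigma> (fa_mult (fa_word w) ?g) (fa_mult ?g c)" using Cons(1) vw by blast
  define Y where "Y = fa_diff ?h (fa_scale (\<i> * complex_of_real (\<sigma> f (snd x))) (fa_mult (fa_mult ?h ?h) ?g))"
  have Yc: "Y \<in> fa_carrier" unfolding Y_def using l lx by (simp add: fa_carrier_intros)
  have hc: "?h \<in> fa_carrier" using lx by (rule fa_gen_in_carrier)
  have "fa_mult (fa_word (x # w)) ?g = fa_mult ?h (fa_mult (fa_word w) ?g)" by (simp add: fa_word_Cons fa_mult_assoc)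
  moreover have "rel_eq \<sigma> (fa_mult ?h (fa_mult (fa_word w) ?g)) (fa_mult (fa_mult ?h ?g) c)"
    using rel_eq_mult_left[OF c(2) hc] by (simp add: fa_mult_assoc)
  moreover have "rel_eq \<sigma> (fa_mult (fa_mult ?h ?g) c) (fa_mult (fa_mult ?g Y) c)"
    unfolding Y_def by (rule rel_eq_mult_right[OF gen_commute_right[OF l lx] c(1)])
  ultimately have "rel_eq \<sigma> (fa_mult (fa_word (x # w)) ?g) (fa_mult ?g (fa_mult Y c))"
    by (metis rel_eq_trans fa_mult_assoc)
  then show ?case using Yc c(1) fa_mult_in_carrier by blast
qed

lemma gen_mult_word_rel_eq: "valid_word w \<Longrightarrow> \<exists>c\<in>fa_carrier. rel_eq \<sigma> (fa_mult (fa_gen l f) (fa_word w)) (fa_mult c (fa_gen l f))"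
proof (induct w)
  case Nil then show ?case
    by (intro bexI[of _ fa_unit]) (simp_all add: fa_unit_eq_word[symmetric] fa_mult_unit_left fa_mult_unit_right rel_eq_refl fa_unit_in_carrier)
next
  case (Cons x w)
  let ?g = "fa_gen l f" and ?h = "fa_gen (fst x) (snd x)"
  have vw: "valid_word w" and lx: "fst x \<noteq> 0" using Cons(2) unfolding valid_word_def by auto
  obtain c where c: "c \<in> fa_carrier" "rel_eq \<sigma> (fa_mult ?g (fa_word w)) (fa_mult c ?g)" using Cons(1) vw by blast
  define X where "X = fa_add ?h (fa_scale (\<i> * complex_of_real (\<sigma> f (snd x))) (fa_mult (fa_mult ?g ?h) ?h))"
  have Xc: "X \<in> fa_carrier" unfolding X_def using l lx by (simp add: fa_carrier_intros)
  have wc: "fa_word w \<in> fa_carrier" using vw by (rule fa_word_in_carrier)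
  have "fa_mult ?g (fa_word (x # w)) = fa_mult (fa_mult ?g ?h) (fa_word w)" by (simp add: fa_word_Cons fa_mult_assoc)
  moreover have "rel_eq \<sigma> (fa_mult (fa_mult ?g ?h) (fa_word w)) (fa_mult (fa_mult X ?g) (fa_word w))"
    unfolding X_def by (rule rel_eq_mult_right[OF gen_commute_left[OF l lx] wc])
  moreover have "rel_eq \<sigma> (fa_mult X (fa_mult ?g (fa_word w))) (fa_mult X (fa_mult c ?g))"
    by (rule rel_eq_mult_left[OF c(2) Xc])
  ultimately have "rel_eq \<sigma> (fa_mult ?g (fa_word (x # w))) (fa_mult (fa_mult X c) ?g)"
    by (metis rel_eq_trans fa_mult_assoc)
  then show ?case using Xc c(1) fa_mult_in_carrier by blast
qed

lemma mult_gen_rel_eq_gen_mult: assumes "a \<in> fa_carrier"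
  shows "\<exists>c\<in>fa_carrier. rel_eq \<sigma> (fa_mult a (fa_gen l f)) (fa_mult (fa_gen l f) c)"
proof -
  have "a \<in> fa_span fa_words" using assms by (rule fa_carrier_in_span_words)
  then show ?thesis
  proof (induct a rule: fa_span.induct)
    case span_zero then show ?case
      by (intro bexI[of _ fa_zero]) (simp_all add: fa_mult_zero_left fa_mult_zero_right rel_eq_refl fa_zero_in_carrier)
  next
    case (span_step a p k)
    then obtain w where w: "a = fa_word w" "valid_word w" unfolding fa_words_def by blast
    obtain c1 where c1: "c1 \<in> fa_carrier" "rel_eq \<sigma> (fa_mult (fa_word w) (fa_gen l f)) (fa_mult (fa_gen l f) c1)"
      using word_mult_gen_rel_eq w(2) by blast
    obtain c2 where c2: "c2 \<in> fa_carrier" "rel_eq \<sigma> (fa_mult p (fa_gen l f)) (fa_mult (fa_gen l f) c2)"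
      using span_step(3) by blast
    have "rel_eq \<sigma> (fa_mult (fa_add (fa_scale k a) p) (fa_gen l f)) (fa_mult (fa_gen l f) (fa_add (fa_scale k c1) c2))"
      using rel_eq_add[OF rel_eq_scale[OF c1(2), of k] c2(2)] w
      by (simp add: fa_mult_add_left fa_mult_add_right fa_mult_scale_left fa_mult_scale_right)
    then show ?case using c1 c2 by (blast intro: fa_add_in_carrier fa_scale_in_carrier)
  qed
qed

lemma gen_mult_rel_eq_mult_gen: assumes "a \<in> fa_carrier"
  shows "\<exists>c\<in>fa_carrier. rel_eq \<sigma> (fa_mult (fa_gen l f) a) (fa_mult c (fa_gen l f))"
proof -
  have "a \<in> fa_span fa_words" using assms by (rule fa_carrier_in_span_words)
  then show ?thesis
  proof (induct a rule: fa_span.induct)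
    case span_zero then show ?case
      by (intro bexI[of _ fa_zero]) (simp_all add: fa_mult_zero_left fa_mult_zero_right rel_eq_refl fa_zero_in_carrier)
  next
    case (span_step a p k)
    then obtain w where w: "a = fa_word w" "valid_word w" unfolding fa_words_def by blast
    obtain c1 where c1: "c1 \<in> fa_carrier" "rel_eq \<sigma> (fa_mult (fa_gen l f) (fa_word w)) (fa_mult c1 (fa_gen l f))"
      using gen_mult_word_rel_eq w(2) by blast
    obtain c2 where c2: "c2 \<in> fa_carrier" "rel_eq \<sigma> (fa_mult (fa_gen l f) p) (fa_mult c2 (fa_gen l f))"
      using span_step(3) by blast
    have "rel_eq \<sigma> (fa_mult (fa_gen l f) (fa_add (fa_scale k a) p)) (fa_mult (fa_add (fa_scale k c1) c2) (fa_gen l f))"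
      using rel_eq_add[OF rel_eq_scale[OF c1(2), of k] c2(2)] w
      by (simp add: fa_mult_add_left fa_mult_add_right fa_mult_scale_left fa_mult_scale_right)
    then show ?case using c1 c2 by (blast intro: fa_add_in_carrier fa_scale_in_carrier)
  qed
qed

end

lemma right_span_memD: assumes "A \<in> fa_carrier" "x \<in> right_span A" shows "\<exists>B\<in>fa_carrier. x = fa_mult A B"
  using assms(2) unfolding right_span_def
proof (induct x rule: fa_span.induct)
  case span_zero then show ?case using fa_zero_in_carrier fa_mult_zero_right by metis
next
  case (span_step a p c)
  then obtain B1 B2 where "a = fa_mult A B1" "B1 \<in> fa_carrier" "p = fa_mult A B2" "B2 \<in> fa_carrier" by blast
  then show ?case
    by (intro bexI[of _ "fa_add (fa_scale c B1) B2"]) (simp_all add: fa_mult_add_right fa_mult_scale_right fa_carrier_intros)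
qed

lemma left_span_memD: assumes "A \<in> fa_carrier" "x \<in> left_span A" shows "\<exists>B\<in>fa_carrier. x = fa_mult B A"
  using assms(2) unfolding left_span_def
proof (induct x rule: fa_span.induct)
  case span_zero then show ?case using fa_zero_in_carrier fa_mult_zero_left by metis
next
  case (span_step a p c)
  then obtain B1 B2 where "a = fa_mult B1 A" "B1 \<in> fa_carrier" "p = fa_mult B2 A" "B2 \<in> fa_carrier" by blast
  then show ?case
    by (intro bexI[of _ "fa_add (fa_scale c B1) B2"]) (simp_all add: fa_mult_add_left fa_mult_scale_left fa_carrier_intros)
qed

lemma fa_mult_in_right_span: "B \<in> fa_carrier \<Longrightarrow> fa_mult A B \<in> right_span A"
  unfolding right_span_def by (rule fa_span_base) blast
lemma fa_mult_in_left_span: "B \<in> fa_carrier \<Longrightarrow> fa_mult B A \<in> left_span A"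
  unfolding left_span_def by (rule fa_span_base) blast
lemma fa_mult_in_two_sided_span: "B \<in> fa_carrier \<Longrightarrow> C \<in> fa_carrier \<Longrightarrow> fa_mult (fa_mult B A) C \<in> two_sided_span A"
  unfolding two_sided_span_def by (rule fa_span_base) blast

lemma two_sided_span_gen_rel_eq: assumes l: "l \<noteq> 0" and "x \<in> two_sided_span (fa_gen l f)"
  shows "\<exists>B\<in>fa_carrier. rel_eq \<sigma> x (fa_mult B (fa_gen l f))"
  using assms(2) unfolding two_sided_span_def
proof (induct x rule: fa_span.induct)
  case span_zero then show ?case using fa_zero_in_carrier fa_mult_zero_left rel_eq_refl by metis
next
  case (span_step a p c)
  then obtain B C where a: "a = fa_mult (fa_mult B (fa_gen l f)) C" "B \<in> fa_carrier" "C \<in> fa_carrier" by blast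
  obtain C' where C': "C' \<in> fa_carrier" "rel_eq \<sigma> (fa_mult (fa_gen l f) C) (fa_mult C' (fa_gen l f))"
    using gen_mult_rel_eq_mult_gen[OF l a(3)] by blast
  have "rel_eq \<sigma> a (fa_mult (fa_mult B C') (fa_gen l f))"
    using rel_eq_mult_left[OF C'(2) a(2)] a(1) by (simp add: fa_mult_assoc)
  then have e1: "rel_eq \<sigma> (fa_scale c a) (fa_scale c (fa_mult (fa_mult B C') (fa_gen l f)))" by (rule rel_eq_scale)
  obtain B2 where B2: "B2 \<in> fa_carrier" "rel_eq \<sigma> p (fa_mult B2 (fa_gen l f))" using span_step by blast
  have "rel_eq \<sigma> (fa_add (fa_scale c a) p) (fa_mult (fa_add (fa_scale c (fa_mult B C')) B2) (fa_gen l f))"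
    using rel_eq_add[OF e1 B2(2)] by (simp add: fa_mult_add_left fa_mult_scale_left)
  then show ?case using a C' B2 by (blast intro: fa_carrier_intros)
qed

section \<open>Closures\<close>

lemma res_in_closure_transfer:
  assumes ex: "\<exists>\<omega>. resolvent_state \<sigma> \<omega>" and s: "\<forall>n. s n \<in> fa_carrier"
    and cl: "res_in_closure \<sigma> s S1"
    and tr: "\<And>a. a \<in> S1 \<Longrightarrow> \<exists>b\<in>S2. a \<in> fa_carrier \<and> b \<in> fa_carrier \<and> rel_eq \<sigma> a b"
  shows "res_in_closure \<sigma> s S2"
  unfolding res_in_closure_def
proof (intro allI impI)
  fix e :: real assume e: "e > 0"
  obtain a M where a: "a \<in> S1" "\<forall>n\<ge>M. resolvent_seminorm \<sigma> (fa_diff (s n) a) < e"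
    using cl e unfolding res_in_closure_def by blast
  obtain b where b: "b \<in> S2" "a \<in> fa_carrier" "b \<in> fa_carrier" "rel_eq \<sigma> a b" using tr[OF a(1)] by blast
  have "\<forall>n\<ge>M. resolvent_seminorm \<sigma> (fa_diff (s n) b) < e"
  proof (intro allI impI)
    fix n :: nat assume "n \<ge> M"
    have "rel_eq \<sigma> (fa_diff (s n) a) (fa_diff (s n) b)" by (rule rel_eq_diff[OF rel_eq_refl b(4)])
    then have eq: "resolvent_seminorm \<sigma> (fa_diff (s n) a) = resolvent_seminorm \<sigma> (fa_diff (s n) b)"
      using s b by (intro seminorm_rel_eq) (simp_all add: fa_carrier_intros)
    have "resolvent_seminorm \<sigma> (fa_diff (s n) a) < e" using a(2) \<open>n \<ge> M\<close> by blast
    then show "resolvent_seminorm \<sigma> (fa_diff (s n) b) < e" unfolding eq .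
  qed
  then show "\<exists>b\<in>S2. \<exists>M. \<forall>n\<ge>M. resolvent_seminorm \<sigma> (fa_diff (s n) b) < e" using b(1) by blast
qed

lemma closure_right_span_gen_iff_left_span:
  assumes ex: "\<exists>\<omega>. resolvent_state \<sigma> \<omega>" and s: "\<forall>n. s n \<in> fa_carrier" and l: "l \<noteq> 0"
  shows "res_in_closure \<sigma> s (right_span (fa_gen l f)) \<longleftrightarrow> res_in_closure \<sigma> s (left_span (fa_gen l f))"
proof -
  let ?g = "fa_gen l f"
  have gc: "?g \<in> fa_carrier" using l by (rule fa_gen_in_carrier)
  have rl: "res_in_closure \<sigma> s (left_span ?g)" if "res_in_closure \<sigma> s (right_span ?g)"
  proof (rule res_in_closure_transfer[OF ex s that])
    fix a assume "a \<in> right_span ?g"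
    then obtain B where B: "B \<in> fa_carrier" "a = fa_mult ?g B" using right_span_memD gc by blast
    obtain C where C: "C \<in> fa_carrier" "rel_eq \<sigma> (fa_mult ?g B) (fa_mult C ?g)" using gen_mult_rel_eq_mult_gen[OF l B(1)] by blast
    show "\<exists>b\<in>left_span ?g. a \<in> fa_carrier \<and> b \<in> fa_carrier \<and> rel_eq \<sigma> a b"
      using B C gc by (intro bexI[OF _ fa_mult_in_left_span[OF C(1)]]) (simp add: fa_mult_in_carrier)
  qed
  have lr: "res_in_closure \<sigma> s (right_span ?g)" if "res_in_closure \<sigma> s (left_span ?g)"
  proof (rule res_in_closure_transfer[OF ex s that])
    fix a assume "a \<in> left_span ?g"
    then obtain B where B: "B \<in> fa_carrier" "a = fa_mult B ?g" using left_span_memD gc by blast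
    obtain C where C: "C \<in> fa_carrier" "rel_eq \<sigma> (fa_mult B ?g) (fa_mult ?g C)" using mult_gen_rel_eq_gen_mult[OF l B(1)] by blast
    show "\<exists>b\<in>right_span ?g. a \<in> fa_carrier \<and> b \<in> fa_carrier \<and> rel_eq \<sigma> a b"
      using B C gc by (intro bexI[OF _ fa_mult_in_right_span[OF C(1)]]) (simp add: fa_mult_in_carrier)
  qed
  show ?thesis using rl lr by blast
qed

lemma closure_left_span_gen_iff_two_sided_span:
  assumes ex: "\<exists>\<omega>. resolvent_state \<sigma> \<omega>" and s: "\<forall>n. s n \<in> fa_carrier" and l: "l \<noteq> 0"
  shows "res_in_closure \<sigma> s (left_span (fa_gen l f)) \<longleftrightarrow> res_in_closure \<sigma> s (two_sided_span (fa_gen l f))"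
proof -
  let ?g = "fa_gen l f"
  have gc: "?g \<in> fa_carrier" using l by (rule fa_gen_in_carrier)
  have lt: "res_in_closure \<sigma> s (two_sided_span ?g)" if "res_in_closure \<sigma> s (left_span ?g)"
  proof (rule res_in_closure_transfer[OF ex s that])
    fix a assume "a \<in> left_span ?g"
    then obtain B where B: "B \<in> fa_carrier" "a = fa_mult B ?g" using left_span_memD gc by blast
    have "fa_mult (fa_mult B ?g) fa_unit \<in> two_sided_span ?g" using B(1) fa_unit_in_carrier by (rule fa_mult_in_two_sided_span)
    then show "\<exists>b\<in>two_sided_span ?g. a \<in> fa_carrier \<and> b \<in> fa_carrier \<and> rel_eq \<sigma> a b"
      using B gc by (intro bexI) (simp_all add: fa_mult_unit_right rel_eq_refl fa_mult_in_carrier)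
  qed
  have tl: "res_in_closure \<sigma> s (left_span ?g)" if "res_in_closure \<sigma> s (two_sided_span ?g)"
  proof (rule res_in_closure_transfer[OF ex s that])
    fix a assume a: "a \<in> two_sided_span ?g"
    obtain B where B: "B \<in> fa_carrier" "rel_eq \<sigma> a (fa_mult B ?g)" using two_sided_span_gen_rel_eq[OF l a] by blast
    have ac: "a \<in> fa_carrier" using a unfolding two_sided_span_def
      by (rule fa_span_in_carrier[rotated]) (use gc in \<open>blast intro: fa_mult_in_carrier\<close>)
    show "\<exists>b\<in>left_span ?g. a \<in> fa_carrier \<and> b \<in> fa_carrier \<and> rel_eq \<sigma> a b"
      using B gc ac by (intro bexI[OF _ fa_mult_in_left_span[OF B(1)]]) (simp add: fa_mult_in_carrier)
  qed
  show ?thesis using lt tl by blast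
qed

lemma state_sq_zero_char: "x \<in> fa_carrier \<Longrightarrow> state_sq zero_char x = (cmod (zero_char x))^2"
proof -
  assume x: "x \<in> fa_carrier"
  have "zero_char (fa_mult (fa_star x) x) = complex_of_real ((cmod (zero_char x))^2)"
    using x by (simp add: zero_char_mult zero_char_star fa_carrier_intros)
      (metis complex_norm_square mult.commute of_real_power)
  then show ?thesis unfolding state_sq_def state_form_def by simp
qed

lemma zero_char_two_sided_span: assumes "f \<noteq> 0" "l \<noteq> 0" "a \<in> two_sided_span (fa_gen l f)" shows "zero_char a = 0"
  using assms(3) unfolding two_sided_span_def
proof (induct a rule: fa_span.induct)
  case span_zero then show ?case by (rule zero_char_zero)
next
  case (span_step a p c)
  then obtain B C where a: "a = fa_mult (fa_mult B (fa_gen l f)) C" "B \<in> fa_carrier" "C \<in> fa_carrier" by blast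
  have gc: "fa_gen l f \<in> fa_carrier" using assms(2) by (rule fa_gen_in_carrier)
  have pc: "p \<in> fa_carrier" using span_step(2)
    by (rule fa_span_in_carrier[rotated]) (use gc in \<open>blast intro: fa_mult_in_carrier\<close>)
  have "zero_char a = 0" using a gc assms(1) by (simp add: zero_char_mult zero_char_gen fa_mult_in_carrier)
  then show ?case using span_step(3) a gc pc by (simp add: zero_char_add zero_char_scale fa_carrier_intros)
qed

lemma two_sided_span_gen_proper:
  assumes sy: "symplectic_form \<sigma>" and l: "l \<noteq> 0" and f: "f \<noteq> 0"
  shows "\<exists>s. res_cauchy \<sigma> s \<and> \<not> res_in_closure \<sigma> s (two_sided_span (fa_gen l f))"
proof (intro exI conjI)
  have ex: "\<exists>\<omega>. resolvent_state \<sigma> \<omega>" using resolvent_state_exists[OF sy] .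
  have z: "fa_diff fa_unit fa_unit = fa_zero" unfolding fa_diff_def fa_zero_def by simp
  show "res_cauchy \<sigma> (\<lambda>n. fa_unit)"
    unfolding res_cauchy_def z using seminorm_zero[OF ex] fa_unit_in_carrier by auto
  show "\<not> res_in_closure \<sigma> (\<lambda>n. fa_unit) (two_sided_span (fa_gen l f))"
  proof
    assume "res_in_closure \<sigma> (\<lambda>n. fa_unit) (two_sided_span (fa_gen l f))"
    then obtain a and M :: nat where a: "a \<in> two_sided_span (fa_gen l f)" "\<forall>n\<ge>M. resolvent_seminorm \<sigma> (fa_diff fa_unit a) < 1"
      unfolding res_in_closure_def by (metis zero_less_one)
    have gc: "fa_gen l f \<in> fa_carrier" using l by (rule fa_gen_in_carrier)
    have ac: "a \<in> fa_carrier" using a(1) unfolding two_sided_span_def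
      by (rule fa_span_in_carrier[rotated]) (use gc in \<open>blast intro: fa_mult_in_carrier\<close>)
    have dc: "fa_diff fa_unit a \<in> fa_carrier" using ac by (simp add: fa_carrier_intros)
    have "zero_char (fa_diff fa_unit a) = 1" using zero_char_two_sided_span[OF f l a(1)] ac by (simp add: zero_char_diff zero_char_unit fa_unit_in_carrier)
    then have "state_sq zero_char (fa_diff fa_unit a) = 1" using state_sq_zero_char[OF dc] by simp
    then have "1 \<le> resolvent_seminorm \<sigma> (fa_diff fa_unit a)" using sqrt_state_sq_le_seminorm[OF dc zero_char_state[OF sy]] by simp
    then show False using a(2) by auto
  qed
qed

lemma gen_mult_approx_unit:
  assumes l: "l \<noteq> 0" and m: "m \<noteq> 0" and lm: "m \<noteq> l"
  shows "rel_eq \<sigma> (fa_mult (fa_gen l f) (fa_diff fa_unit (fa_scale (\<i> * complex_of_real m) (fa_gen m f))))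
     (fa_scale (complex_of_real (1 / (m - l)))
       (fa_diff (fa_scale (complex_of_real m) (fa_gen m f)) (fa_scale (complex_of_real l) (fa_gen l f))))"
proof (rule rel_eq_of_scaled_rel[OF resolvent_identity_rel[OF l m, of f \<sigma>], of _ _ "complex_of_real (m / (m - l))"])
  have d: "complex_of_real m - complex_of_real l \<noteq> 0"
    using lm by (metis of_real_diff of_real_eq_0_iff right_minus_eq)
  show "fa_diff (fa_mult (fa_gen l f) (fa_diff fa_unit (fa_scale (\<i> * complex_of_real m) (fa_gen m f))))
     (fa_scale (complex_of_real (1 / (m - l)))
       (fa_diff (fa_scale (complex_of_real m) (fa_gen m f)) (fa_scale (complex_of_real l) (fa_gen l f)))) =
    fa_scale (complex_of_real (m / (m - l)))
     (fa_diff (fa_diff (fa_gen l f) (fa_gen m f))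
       (fa_scale (\<i> * complex_of_real (m - l)) (fa_mult (fa_gen l f) (fa_gen m f))))"
    by (simp only: fa_mult_diff_right fa_mult_scale_right fa_mult_unit_right)
       (simp add: fa_diff_def fa_scale_def, rule ext, use d in \<open>simp add: field_simps\<close>)
qed

lemma gen_rel_eq_gen_mult:
  assumes l: "l \<noteq> 0" and m: "m \<noteq> 0"
  shows "rel_eq \<sigma> (fa_gen m f)
    (fa_mult (fa_gen l f) (fa_diff fa_unit (fa_scale (\<i> * complex_of_real (m - l)) (fa_gen m f))))"
proof (rule rel_eq_of_scaled_rel[OF resolvent_identity_rel[OF l m, of f \<sigma>], of _ _ "-1"])
  show "fa_diff (fa_gen m f)
      (fa_mult (fa_gen l f) (fa_diff fa_unit (fa_scale (\<i> * complex_of_real (m - l)) (fa_gen m f)))) =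
    fa_scale (-1) (fa_diff (fa_diff (fa_gen l f) (fa_gen m f))
      (fa_scale (\<i> * complex_of_real (m - l)) (fa_mult (fa_gen l f) (fa_gen m f))))"
    by (simp only: fa_mult_diff_right fa_mult_scale_right fa_mult_unit_right)
       (simp add: fa_diff_def fa_scale_def, rule ext, simp add: algebra_simps)
qed

lemma seminorm_scale_gen:
  assumes ex: "\<exists>\<omega>. resolvent_state \<sigma> \<omega>" and l: "l \<noteq> 0"
  shows "resolvent_seminorm \<sigma> (fa_scale (complex_of_real l) (fa_gen l f)) \<le> 1"
proof -
  have "resolvent_seminorm \<sigma> (fa_scale (complex_of_real l) (fa_gen l f)) \<le> \<bar>l\<bar> * resolvent_seminorm \<sigma> (fa_gen l f)"
    using seminorm_scale[OF ex fa_gen_in_carrier[OF l], of "complex_of_real l" f] by simp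
  also have "\<dots> \<le> \<bar>l\<bar> * (1 / \<bar>l\<bar>)"
    by (rule mult_left_mono[OF seminorm_gen[OF ex l]]) simp
  finally show ?thesis using l by simp
qed

lemma seminorm_gen_mult_approx_unit_le:
  assumes ex: "\<exists>\<omega>. resolvent_state \<sigma> \<omega>" and l: "l \<noteq> 0" and m: "m \<noteq> 0" and ml: "m > l"
  shows "resolvent_seminorm \<sigma> (fa_mult (fa_gen l f) (fa_diff fa_unit (fa_scale (\<i> * complex_of_real m) (fa_gen m f))))
    \<le> 2 / (m - l)"
proof -
  let ?g = "fa_gen l f" and ?h = "fa_gen m f"
  let ?D = "fa_diff (fa_scale (complex_of_real m) ?h) (fa_scale (complex_of_real l) ?g)"
  have gc: "?g \<in> fa_carrier" and hc: "?h \<in> fa_carrier" using l m by (simp_all add: fa_gen_in_carrier)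
  have Dc: "?D \<in> fa_carrier" using gc hc by (simp add: fa_carrier_intros)
  have ND: "resolvent_seminorm \<sigma> ?D \<le> 2"
    using seminorm_diff[OF ex fa_scale_in_carrier[OF hc] fa_scale_in_carrier[OF gc],
        of "complex_of_real m" "complex_of_real l"]
      seminorm_scale_gen[OF ex m, of f] seminorm_scale_gen[OF ex l, of f] by linarith
  have "resolvent_seminorm \<sigma> (fa_mult ?g (fa_diff fa_unit (fa_scale (\<i> * complex_of_real m) ?h)))
      = resolvent_seminorm \<sigma> (fa_scale (complex_of_real (1 / (m - l))) ?D)"
    using gc hc ml by (intro seminorm_rel_eq gen_mult_approx_unit l m) (simp_all add: fa_carrier_intros)
  also have "\<dots> \<le> cmod (complex_of_real (1 / (m - l))) * resolvent_seminorm \<sigma> ?D"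
    using Dc by (rule seminorm_scale[OF ex])
  also have "\<dots> = (1 / (m - l)) * resolvent_seminorm \<sigma> ?D" unfolding norm_of_real using ml by simp
  also have "\<dots> \<le> (1 / (m - l)) * 2" using ND ml by (intro mult_left_mono) auto
  finally show ?thesis by simp
qed

lemma mult_approx_unit_rel_eq_gen_mult:
  assumes a: "a \<in> fa_carrier" and l: "l \<noteq> 0" and m: "m \<noteq> 0"
  shows "\<exists>c\<in>fa_carrier. rel_eq \<sigma> (fa_mult a (fa_scale (\<i> * complex_of_real m) (fa_gen m f))) (fa_mult (fa_gen l f) c)"
proof -
  let ?g = "fa_gen l f" and ?h = "fa_gen m f"
  obtain c where c: "c \<in> fa_carrier" "rel_eq \<sigma> (fa_mult a ?h) (fa_mult ?h c)"
    using mult_gen_rel_eq_gen_mult[OF m a] by blast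
  define T where "T = fa_diff fa_unit (fa_scale (\<i> * complex_of_real (m - l)) ?h)"
  have "rel_eq \<sigma> (fa_mult ?h c) (fa_mult (fa_mult ?g T) c)"
    unfolding T_def by (rule rel_eq_mult_right[OF gen_rel_eq_gen_mult[OF l m] c(1)])
  then have "rel_eq \<sigma> (fa_mult a (fa_scale (\<i> * complex_of_real m) ?h))
      (fa_mult ?g (fa_scale (\<i> * complex_of_real m) (fa_mult T c)))"
    unfolding fa_mult_scale_right by (metis c(2) rel_eq_scale rel_eq_trans fa_mult_assoc)
  moreover have "fa_scale (\<i> * complex_of_real m) (fa_mult T c) \<in> fa_carrier"
    unfolding T_def using m c(1) by (simp add: fa_carrier_intros)
  ultimately show ?thesis by blast
qed

lemma gen_right_approx_unit:
  assumes ex: "\<exists>\<omega>. resolvent_state \<sigma> \<omega>" and l: "l \<noteq> 0" and K: "K > 0"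
  obtains u where "u \<in> fa_carrier" "resolvent_seminorm \<sigma> u \<le> 1"
    "resolvent_seminorm \<sigma> (fa_mult (fa_gen l f) (fa_diff fa_unit u)) \<le> 1 / K"
    "\<And>a. a \<in> fa_carrier \<Longrightarrow> \<exists>c\<in>fa_carrier. rel_eq \<sigma> (fa_mult a u) (fa_mult (fa_gen l f) c)"
proof
  define m where "m = \<bar>l\<bar> + 2 * K + 1"
  have m: "m \<noteq> 0" and ml: "m - l \<ge> 2 * K + 1" unfolding m_def using K by auto
  define u where "u = fa_scale (\<i> * complex_of_real m) (fa_gen m f)"
  show "u \<in> fa_carrier" unfolding u_def using m by (simp add: fa_carrier_intros)
  have "u = fa_scale \<i> (fa_scale (complex_of_real m) (fa_gen m f))"
    unfolding u_def fa_scale_def by (simp add: mult.assoc)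
  then have "resolvent_seminorm \<sigma> u \<le> cmod \<i> * resolvent_seminorm \<sigma> (fa_scale (complex_of_real m) (fa_gen m f))"
    using m by (metis seminorm_scale[OF ex] fa_gen_in_carrier fa_scale_in_carrier)
  then show "resolvent_seminorm \<sigma> u \<le> 1" using seminorm_scale_gen[OF ex m, of f] by simp
  have "resolvent_seminorm \<sigma> (fa_mult (fa_gen l f) (fa_diff fa_unit u)) \<le> 2 / (m - l)"
    unfolding u_def using ml K by (intro seminorm_gen_mult_approx_unit_le ex l m) simp
  also have "\<dots> \<le> 1 / K" using ml K by (simp add: field_simps)
  finally show "resolvent_seminorm \<sigma> (fa_mult (fa_gen l f) (fa_diff fa_unit u)) \<le> 1 / K" .
  show "\<exists>c\<in>fa_carrier. rel_eq \<sigma> (fa_mult a u) (fa_mult (fa_gen l f) c)" if "a \<in> fa_carrier" for a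
    unfolding u_def using that l m by (rule mult_approx_unit_rel_eq_gen_mult)
qed

lemma seminorm_diff_mult_le:
  assumes ex: "\<exists>\<omega>. resolvent_state \<sigma> \<omega>"
    and x: "x \<in> fa_carrier" and A: "A \<in> fa_carrier" and B: "B \<in> fa_carrier" and u: "u \<in> fa_carrier"
  shows "resolvent_seminorm \<sigma> (fa_diff x (fa_mult A u))
    \<le> resolvent_seminorm \<sigma> (fa_diff x B) * resolvent_seminorm \<sigma> (fa_diff fa_unit u)
      + resolvent_seminorm \<sigma> (fa_mult B (fa_diff fa_unit u))
      + resolvent_seminorm \<sigma> (fa_diff x A) * resolvent_seminorm \<sigma> u"
proof -
  let ?N = "resolvent_seminorm \<sigma>" and ?v = "fa_diff fa_unit u"
  have v: "?v \<in> fa_carrier" using u by (simp add: fa_carrier_intros)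
  have xB: "fa_mult (fa_diff x B) ?v \<in> fa_carrier" and Bv: "fa_mult B ?v \<in> fa_carrier"
    and xA: "fa_mult (fa_diff x A) u \<in> fa_carrier"
    using x A B u v by (simp_all add: fa_carrier_intros)
  have split: "fa_diff x (fa_mult A u) =
      fa_add (fa_add (fa_mult (fa_diff x B) ?v) (fa_mult B ?v)) (fa_mult (fa_diff x A) u)"
    by (simp only: fa_mult_diff_left fa_mult_diff_right fa_mult_unit_right)
       (simp add: fa_diff_def fa_add_def)
  have "?N (fa_diff x (fa_mult A u)) \<le> ?N (fa_mult (fa_diff x B) ?v) + ?N (fa_mult B ?v) + ?N (fa_mult (fa_diff x A) u)"
    unfolding split
    using seminorm_add[OF ex fa_add_in_carrier[OF xB Bv] xA] seminorm_add[OF ex xB Bv] by linarith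
  moreover have "?N (fa_mult (fa_diff x B) ?v) \<le> ?N (fa_diff x B) * ?N ?v"
    by (rule seminorm_mult[OF ex fa_diff_in_carrier[OF x B] v])
  moreover have "?N (fa_mult (fa_diff x A) u) \<le> ?N (fa_diff x A) * ?N u"
    by (rule seminorm_mult[OF ex fa_diff_in_carrier[OF x A] u])
  ultimately show ?thesis by linarith
qed

lemma seminorm_diff_mult_less:
  assumes ex: "\<exists>\<omega>. resolvent_state \<sigma> \<omega>"
    and x: "x \<in> fa_carrier" and A: "A \<in> fa_carrier" and B: "B \<in> fa_carrier" and u: "u \<in> fa_carrier"
    and xB: "resolvent_seminorm \<sigma> (fa_diff x B) < d1" and xA: "resolvent_seminorm \<sigma> (fa_diff x A) < d2"
    and Nu: "resolvent_seminorm \<sigma> u \<le> 1" and Bv: "resolvent_seminorm \<sigma> (fa_mult B (fa_diff fa_unit u)) < d3"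
  shows "resolvent_seminorm \<sigma> (fa_diff x (fa_mult A u)) < 2 * d1 + d3 + d2"
proof -
  let ?N = "resolvent_seminorm \<sigma>"
  have v: "fa_diff fa_unit u \<in> fa_carrier" using u by (simp add: fa_carrier_intros)
  have "?N (fa_diff fa_unit u) \<le> 2"
    using seminorm_diff[OF ex fa_unit_in_carrier u] seminorm_unit[OF ex] Nu by simp
  moreover have "0 \<le> ?N (fa_diff x B)" "0 \<le> ?N (fa_diff x A)" "0 \<le> ?N (fa_diff fa_unit u)" "0 \<le> ?N u"
    using x A B u v by (simp_all add: seminorm_nonneg[OF ex] fa_carrier_intros)
  ultimately have "?N (fa_diff x B) * ?N (fa_diff fa_unit u) \<le> d1 * 2"
    and "?N (fa_diff x A) * ?N u \<le> d2 * 1"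
    using xB xA Nu by (intro mult_mono; simp)+
  then show ?thesis using seminorm_diff_mult_le[OF ex x A B u] Bv by linarith
qed

lemma closure_right_span_mult_gen:
  assumes ex: "\<exists>\<omega>. resolvent_state \<sigma> \<omega>" and s: "\<forall>n. s n \<in> fa_carrier" and P: "P \<in> fa_carrier"
    and l: "l \<noteq> 0"
    and clP: "res_in_closure \<sigma> s (right_span P)"
    and clg: "res_in_closure \<sigma> s (left_span (fa_gen l f))"
  shows "res_in_closure \<sigma> s (right_span (fa_mult P (fa_gen l f)))"
  unfolding res_in_closure_def
proof (intro allI impI)
  fix e :: real assume e: "e > 0"
  let ?g = "fa_gen l f" and ?N = "resolvent_seminorm \<sigma>"
  have gc: "?g \<in> fa_carrier" using l by (rule fa_gen_in_carrier)
  obtain b1 and M1 :: nat where b1: "b1 \<in> left_span ?g" "\<forall>n\<ge>M1. ?N (fa_diff (s n) b1) < e/6"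
    using clg e unfolding res_in_closure_def by (metis divide_pos_pos zero_less_numeral)
  obtain b where b: "b \<in> fa_carrier" "b1 = fa_mult b ?g" using left_span_memD[OF gc b1(1)] by blast
  obtain a1 and M2 :: nat where a1: "a1 \<in> right_span P" "\<forall>n\<ge>M2. ?N (fa_diff (s n) a1) < e/3"
    using clP e unfolding res_in_closure_def by (metis divide_pos_pos zero_less_numeral)
  obtain a where a: "a \<in> fa_carrier" "a1 = fa_mult P a" using right_span_memD[OF P a1(1)] by blast
  have Nb: "0 \<le> ?N b" using seminorm_nonneg[OF ex b(1)] .
  have K: "3 * (?N b + 1) / e > 0" using Nb e by simp
  obtain u where u: "u \<in> fa_carrier" and Nu: "?N u \<le> 1"
    and Ngv: "?N (fa_mult ?g (fa_diff fa_unit u)) \<le> 1 / (3 * (?N b + 1) / e)"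
    and absorb: "\<And>a. a \<in> fa_carrier \<Longrightarrow> \<exists>c\<in>fa_carrier. rel_eq \<sigma> (fa_mult a u) (fa_mult ?g c)"
    using gen_right_approx_unit[OF ex l K] by blast
  have v: "fa_diff fa_unit u \<in> fa_carrier" using u by (simp add: fa_carrier_intros)
  have Nbgv: "?N (fa_mult (fa_mult b ?g) (fa_diff fa_unit u)) < e / 3"
  proof -
    have "?N (fa_mult (fa_mult b ?g) (fa_diff fa_unit u)) \<le> ?N b * (1 / (3 * (?N b + 1) / e))"
      using seminorm_mult[OF ex b(1) fa_mult_in_carrier[OF gc v]] mult_left_mono[OF Ngv Nb]
      by (simp add: fa_mult_assoc)
    also have "\<dots> < e / 3" using Nb e by (simp add: field_simps)
    finally show ?thesis .
  qed
  obtain c where c: "c \<in> fa_carrier" and au: "rel_eq \<sigma> (fa_mult a u) (fa_mult ?g c)"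
    using absorb[OF a(1)] by blast
  have "?N (fa_diff (s n) (fa_mult (fa_mult P ?g) c)) < e" if n: "n \<ge> max M1 M2" for n
  proof -
    have sn: "s n \<in> fa_carrier" using s by blast
    have Pa: "fa_mult P a \<in> fa_carrier" and bg: "fa_mult b ?g \<in> fa_carrier"
      using P a(1) b(1) gc by (simp_all add: fa_mult_in_carrier)
    have "rel_eq \<sigma> (fa_diff (s n) (fa_mult (fa_mult P ?g) c)) (fa_diff (s n) (fa_mult (fa_mult P a) u))"
      using rel_eq_diff[OF rel_eq_refl rel_eq_sym[OF rel_eq_mult_left[OF au P]]] by (simp add: fa_mult_assoc)
    then have "?N (fa_diff (s n) (fa_mult (fa_mult P ?g) c)) = ?N (fa_diff (s n) (fa_mult (fa_mult P a) u))"
      using sn P gc c Pa u by (intro seminorm_rel_eq) (simp_all add: fa_carrier_intros)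
    also have "\<dots> < 2 * (e/6) + e/3 + e/3"
      using a1(2) a(2) b1(2) b(2) n Nu Nbgv by (intro seminorm_diff_mult_less[OF ex sn Pa bg u]) auto
    finally show ?thesis by simp
  qed
  moreover have "fa_mult (fa_mult P ?g) c \<in> right_span (fa_mult P ?g)" using c by (rule fa_mult_in_right_span)
  ultimately show "\<exists>a\<in>right_span (fa_mult P ?g). \<exists>M. \<forall>n\<ge>M. ?N (fa_diff (s n) a) < e" by blast
qed

lemma closure_right_span_mult_left:
  assumes ex: "\<exists>\<omega>. resolvent_state \<sigma> \<omega>" and s: "\<forall>n. s n \<in> fa_carrier"
    and P: "P \<in> fa_carrier" and Q: "Q \<in> fa_carrier"
    and cl: "res_in_closure \<sigma> s (right_span (fa_mult P Q))"
  shows "res_in_closure \<sigma> s (right_span P)"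
proof (rule res_in_closure_transfer[OF ex s cl])
  fix a assume "a \<in> right_span (fa_mult P Q)"
  then obtain B where B: "B \<in> fa_carrier" "a = fa_mult P (fa_mult Q B)"
    using right_span_memD P Q fa_mult_in_carrier fa_mult_assoc by metis
  then show "\<exists>b\<in>right_span P. a \<in> fa_carrier \<and> b \<in> fa_carrier \<and> rel_eq \<sigma> a b"
    using P Q by (intro bexI[OF _ fa_mult_in_right_span[of "fa_mult Q B"]]) (auto simp: rel_eq_refl fa_mult_in_carrier)
qed

lemma closure_right_span_mult_right_gen:
  assumes ex: "\<exists>\<omega>. resolvent_state \<sigma> \<omega>" and s: "\<forall>n. s n \<in> fa_carrier"
    and P: "P \<in> fa_carrier" and l: "l \<noteq> 0"
    and cl: "res_in_closure \<sigma> s (right_span (fa_mult P (fa_gen l f)))"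
  shows "res_in_closure \<sigma> s (right_span (fa_gen l f))"
proof (rule res_in_closure_transfer[OF ex s cl])
  let ?g = "fa_gen l f"
  have gc: "?g \<in> fa_carrier" using l by (rule fa_gen_in_carrier)
  fix a assume "a \<in> right_span (fa_mult P ?g)"
  then obtain B where B: "B \<in> fa_carrier" "a = fa_mult (fa_mult P ?g) B"
    using right_span_memD P gc fa_mult_in_carrier by blast
  obtain C where C: "C \<in> fa_carrier" "rel_eq \<sigma> (fa_mult P ?g) (fa_mult ?g C)"
    using mult_gen_rel_eq_gen_mult[OF l P] by blast
  have "rel_eq \<sigma> a (fa_mult ?g (fa_mult C B))"
    using rel_eq_mult_right[OF C(2) B(1)] B(2) by (simp add: fa_mult_assoc)
  then show "\<exists>b\<in>right_span ?g. a \<in> fa_carrier \<and> b \<in> fa_carrier \<and> rel_eq \<sigma> a b"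
    using B C P gc by (intro bexI[OF _ fa_mult_in_right_span[of "fa_mult C B"]]) (auto simp: fa_mult_in_carrier)
qed

lemma foldr_fa_mult: "foldr fa_mult xs z = fa_mult (foldr fa_mult xs fa_unit) z"
  by (induct xs) (simp_all add: fa_mult_unit_left fa_mult_assoc)

lemma fa_prod_snoc: "fa_prod (xs @ [x]) = fa_mult (fa_prod xs) x"
  unfolding fa_prod_def by (simp add: fa_mult_unit_right foldr_fa_mult[of xs x])

lemma fa_prod_in_carrier: "(\<forall>x\<in>set xs. x \<in> fa_carrier) \<Longrightarrow> fa_prod xs \<in> fa_carrier"
  unfolding fa_prod_def by (induct xs) (simp_all add: fa_unit_in_carrier fa_mult_in_carrier)

lemma closure_right_span_fa_prod:
  assumes ex: "\<exists>\<omega>. resolvent_state \<sigma> \<omega>" and s: "\<forall>n. s n \<in> fa_carrier"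
    and "xs \<noteq> []" and "\<forall>x\<in>set xs. fst x \<noteq> 0"
  shows "(\<forall>x\<in>set xs. res_in_closure \<sigma> s (right_span (fa_gen (fst x) (snd x)))) \<longleftrightarrow>
    res_in_closure \<sigma> s (right_span (fa_prod (map (\<lambda>(l, f). fa_gen l f) xs)))"
  using assms(3,4)
proof (induction xs rule: rev_induct)
  case (snoc x xs)
  let ?g = "fa_gen (fst x) (snd x)" and ?P = "fa_prod (map (\<lambda>(l, f). fa_gen l f) xs)"
  have lx: "fst x \<noteq> 0" using snoc.prems by simp
  have prod_snoc: "fa_prod (map (\<lambda>(l, f). fa_gen l f) (xs @ [x])) = fa_mult ?P ?g"
    by (cases x) (simp add: fa_prod_snoc)
  show ?case
  proof (cases "xs = []")
    case True
    then show ?thesis using prod_snoc by (simp add: fa_prod_def fa_mult_unit_left)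
  next
    case False
    have P: "?P \<in> fa_carrier"
      using snoc.prems by (intro fa_prod_in_carrier) (force intro: fa_gen_in_carrier)
    have "(\<forall>y\<in>set (xs @ [x]). res_in_closure \<sigma> s (right_span (fa_gen (fst y) (snd y)))) \<longleftrightarrow>
        res_in_closure \<sigma> s (right_span ?P) \<and> res_in_closure \<sigma> s (right_span ?g)"
      using snoc False by auto
    also have "\<dots> \<longleftrightarrow> res_in_closure \<sigma> s (right_span (fa_mult ?P ?g))"
      using closure_right_span_mult_gen[OF ex s P lx] closure_right_span_gen_iff_left_span[OF ex s lx, of "snd x"]
        closure_right_span_mult_left[OF ex s P fa_gen_in_carrier[OF lx]]
        closure_right_span_mult_right_gen[OF ex s P lx] by blast
    finally show ?thesis unfolding prod_snoc .
  qed
qed simp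

theorem theorem3p8:
  fixes \<sigma> :: "'a::real_vector \<Rightarrow> 'a \<Rightarrow> real"
  assumes "symplectic_form \<sigma>"
  shows
    "(\<forall>l f. l \<noteq> 0 \<longrightarrow> f \<noteq> 0 \<longrightarrow>
        (\<forall>s. res_cauchy \<sigma> s \<longrightarrow>
           (res_in_closure \<sigma> s (right_span (fa_gen l f)) \<longleftrightarrow>
              res_in_closure \<sigma> s (left_span (fa_gen l f))) \<and>
           (res_in_closure \<sigma> s (left_span (fa_gen l f)) \<longleftrightarrow>
              res_in_closure \<sigma> s (two_sided_span (fa_gen l f)))) \<and>
        (\<exists>s. res_cauchy \<sigma> s \<and> \<not> res_in_closure \<sigma> s (two_sided_span (fa_gen l f))))
     \<and>
     (\<forall>(ls :: real list) (fs :: 'a list).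
        fs \<noteq> [] \<longrightarrow> length ls = length fs \<longrightarrow> distinct fs \<longrightarrow>
        (\<forall>f\<in>set fs. f \<noteq> 0) \<longrightarrow> (\<forall>l\<in>set ls. l \<noteq> 0) \<longrightarrow>
        (\<forall>s. res_cauchy \<sigma> s \<longrightarrow>
           ((\<forall>i<length fs. res_in_closure \<sigma> s (right_span (fa_gen (ls ! i) (fs ! i)))) \<longleftrightarrow>
            res_in_closure \<sigma> s
              (right_span (fa_prod (map (\<lambda>(l, f). fa_gen l f) (zip ls fs)))))))"
proof -
  have ex: "\<exists>\<omega>. resolvent_state \<sigma> \<omega>" using resolvent_state_exists[OF assms] .
  have carrier: "\<forall>n. s n \<in> fa_carrier" if "res_cauchy \<sigma> s" for s
    using that unfolding res_cauchy_def by blast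
  have products: "(\<forall>i<length fs. res_in_closure \<sigma> s (right_span (fa_gen (ls ! i) (fs ! i)))) \<longleftrightarrow>
      res_in_closure \<sigma> s (right_span (fa_prod (map (\<lambda>(l, f). fa_gen l f) (zip ls fs))))"
    if "fs \<noteq> []" "length ls = length fs" "\<forall>l\<in>set ls. l \<noteq> 0" "res_cauchy \<sigma> s" for ls fs s
  proof -
    have "zip ls fs \<noteq> []" and "\<forall>x\<in>set (zip ls fs). fst x \<noteq> 0"
      using that by (auto simp: zip_eq_Nil_iff dest: set_zip_leftD)
    from closure_right_span_fa_prod[OF ex carrier[OF that(4)] this] show ?thesis
      using that(2) by (auto simp: set_zip)
  qed
  show ?thesis
    using closure_right_span_gen_iff_left_span[OF ex carrier] closure_left_span_gen_iff_two_sided_span[OF ex carrier]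
      two_sided_span_gen_proper[OF assms] products by simp
qed

end
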